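(* Let $s\in(0,1)$ and $p>1$ with $sp<1$, and let $T\in\mathbb{N}$. Let $\mathbf{X}\in\mathbb{X}_T$ and $i\in\{1,\dots,T\}$ be such that the multiplicity $m_i=\#\{j\in\{1,\dots,T\}: x_j=x_i\}$ satisfies $m_i>1$. Then \[ \partial^+_{x_i}\mathcal{F}^s_p[\mathbf{X}]=-\infty\qquad\text{and}\qquad \partial^-_{x_i}\mathcal{F}^s_p[\mathbf{X}]=+\infty, \] where $\partial^\pm_{x_i}\mathcal{F}^s_p[\mathbf{X}]=\lim_{h\to0^\pm}\frac{\mathcal{F}^s_p[\mathbf{X}+he_i]-\mathcal{F}^s_p[\mathbf{X}]}{h}$.
   Context: One-dimensional setting. Let $T\in\mathbb{N}$. A configuration is a set $\mathbf{X}=\bigcup_{k\in\mathbb{Z}}(\bar{\mathbf{X}}+kT)$ with $\bar{\mathbf{X}}=(x_1,\dots,x_T)\in[0,T)^T$, $x_i\le x_j$ for $i<j$ (points counted with multiplicity); $\mathbb{X}_T$ is the set of configurations. For $\mathbf{X}\in\mathbb{X}_T$, $u[\mathbf{X}]$ is the $T$-periodic function (defined up to an additive constant) with distributional derivative $\mathrm{D}u[\mathbf{X}]=\mathcal{L}^1-\sum_{x\in\mathbf{X}}\delta_x$ (multiplicities counted), i.e. slope $1$ with downward jumps equal to the multiplicity at each point. $\mathcal{F}^s_p[\mathbf{X}]=\int_0^T\int_{\mathbb{R}}\frac{|u[\mathbf{X}](x)-u[\mathbf{X}](y)|^p}{|x-y|^{1+sp}}\,\mathrm{d}y\,\mathrm{d}x$.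 The rigid variation $\mathbf{X}+he_i$ is the configuration obtained by replacing the single point $x_i$ with $x_i+h$ (and each $x_i+kT$ with $x_i+h+kT$), all other points unchanged. *)

theory Defs
  imports "HOL-Analysis.Analysis"
begin

text \<open>A configuration in X_T is given by its representative points x 1, ..., x T
  (a function on indices; only indices 1..T matter). The T-periodic function u[X]
  with distributional derivative Lebesgue measure minus the sum of Dirac masses at the
  points of X (with multiplicity), normalised (right-continuous) up to an additive constant.\<close>

definition u_conf :: "nat \<Rightarrow> (nat \<Rightarrow> real) \<Rightarrow> real \<Rightarrow> real" where
  "u_conf T x y = y - (\<Sum>j\<in>{1..T}. real_of_int \<lfloor>(y - x j) / real T\<rfloor>)"

text \<open>The Gagliardo-type energy F^s_p[X] (finite when s p < 1).\<close>

definition F_energy :: "real \<Rightarrow> real \<Rightarrow> nat \<Rightarrow> (nat \<Rightarrow> real) \<Rightarrow> real" where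
  "F_energy s p T x = enn2real
     (\<integral>\<^sup>+ t\<in>{0..<real T}. (\<integral>\<^sup>+ y. ennreal (\<bar>u_conf T x t - u_conf T x y\<bar> powr p
          / \<bar>t - y\<bar> powr (1 + s * p)) \<partial>lborel) \<partial>lborel)"

definition rigid_var :: "(nat \<Rightarrow> real) \<Rightarrow> nat \<Rightarrow> real \<Rightarrow> (nat \<Rightarrow> real)" where
  "rigid_var x i h = x(i := x i + h)"

end

theory Submission
  imports Defs "HOL-Real_Asymp.Real_Asymp"
begin

text \<open>Suppose \<open>m \<ge> 2\<close> points coincide at \<open>a\<close> and one of them moves to \<open>a + h\<close>, \<open>h > 0\<close>.
  Then \<open>u\<close> changes only on \<open>[a, a + h)\<close>, and the energy only through the interaction of this
  interval with its complement. For \<open>t \<in> [a, a + h)\<close> and \<open>y\<close> slightly left of \<open>a\<close> the increment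
  \<open>\<bar>u t - u y\<bar>\<close> drops from \<open>m - d\<close> to \<open>m - 1 - d\<close> (\<open>d = t - y\<close>); by strict convexity of \<open>r\<^sup>p\<close>
  this saves at least \<open>(1 + \<eta>) \<bar>t - y\<bar>\<^sup>-\<^sup>1\<^sup>-\<^sup>s\<^sup>p\<close>. For \<open>y\<close> slightly right of \<open>a + h\<close> the new
  kernel is at most \<open>\<bar>t - y\<bar>\<^sup>-\<^sup>1\<^sup>-\<^sup>s\<^sup>p\<close>, and by reflection about the midpoint of \<open>[a, a + h)\<close>
  this loss is dominated by the bare interaction with the left side; everything else is \<open>O(h)\<close>.
  The net saving, \<open>\<eta>\<close> times a double integral of order \<open>h\<^sup>1\<^sup>-\<^sup>s\<^sup>p\<close>, beats \<open>O(h)\<close> since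
  \<open>s p > 0\<close>, so the right difference quotient tends to \<open>-\<infinity>\<close>. The energy is invariant under the
  reflection \<open>y \<mapsto> c - y\<close> of the configuration, which turns the left difference quotient into
  minus a right one.\<close>

section \<open>Integrals on the real line\<close>

lemma nn_integral_lborel_translate:
  fixes f :: "real \<Rightarrow> ennreal"
  assumes [measurable]: "f \<in> borel_measurable borel"
  shows "(\<integral>\<^sup>+x. f x \<partial>lborel) = (\<integral>\<^sup>+x. f (x + c) \<partial>lborel)"
  using nn_integral_real_affine[OF assms, of 1 c] by (simp add: add.commute)

lemma nn_integral_lborel_reflect:
  fixes f :: "real \<Rightarrow> ennreal"
  assumes [measurable]: "f \<in> borel_measurable borel"
  shows "(\<integral>\<^sup>+x. f x \<partial>lborel) = (\<integral>\<^sup>+x. f (- x) \<partial>lborel)"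
  using nn_integral_real_affine[OF assms, of "-1" 0] by simp

lemma nn_integral_lborel_reflect_at:
  fixes f :: "real \<Rightarrow> ennreal"
  assumes [measurable]: "f \<in> borel_measurable borel"
  shows "(\<integral>\<^sup>+y. f (c - y) \<partial>lborel) = (\<integral>\<^sup>+y. f y \<partial>lborel)"
proof -
  have "(\<integral>\<^sup>+y. f y \<partial>lborel) = (\<integral>\<^sup>+y. f (y + c) \<partial>lborel)"
    by (rule nn_integral_lborel_translate) measurable
  also have "\<dots> = (\<integral>\<^sup>+y. f (- y + c) \<partial>lborel)"
    by (rule nn_integral_lborel_reflect) measurable
  finally show ?thesis by simp
qed

lemma nn_integral_lborel_le_halflines:
  fixes f :: "real \<Rightarrow> ennreal"
  assumes [measurable]: "f \<in> borel_measurable borel"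
  shows "(\<integral>\<^sup>+z. f z \<partial>lborel)
    \<le> (\<integral>\<^sup>+z\<in>{0..}. f z \<partial>lborel) + (\<integral>\<^sup>+z\<in>{0..}. f (- z) \<partial>lborel)"
proof -
  define g where "g z = f (- z) * indicator {0..} z" for z
  have [measurable]: "g \<in> borel_measurable borel" unfolding g_def by measurable
  have "(\<integral>\<^sup>+z. f z \<partial>lborel) \<le> (\<integral>\<^sup>+z. f z * indicator {0..} z + g (- z) \<partial>lborel)"
    by (intro nn_integral_mono) (auto simp: g_def indicator_def)
  also have "\<dots> = (\<integral>\<^sup>+z\<in>{0..}. f z \<partial>lborel) + (\<integral>\<^sup>+z. g (- z) \<partial>lborel)"
    by (intro nn_integral_add) auto
  also have "(\<integral>\<^sup>+z. g (- z) \<partial>lborel) = (\<integral>\<^sup>+z. g z \<partial>lborel)"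
    by (rule nn_integral_lborel_reflect[symmetric]) measurable
  finally show ?thesis unfolding g_def .
qed

lemma abs_powr_nn_integral_near_finite:
  fixes e b c d :: real
  assumes "e > -1"
  shows "(\<integral>\<^sup>+y\<in>{c..d}. ennreal (\<bar>y - b\<bar> powr e) \<partial>lborel) < \<infinity>"
proof -
  define R where "R = \<bar>c - b\<bar> + \<bar>d - b\<bar>"
  have half: "(\<integral>\<^sup>+z\<in>{0..R}. ennreal (z powr e) \<partial>lborel) < \<infinity>"
    using nn_integral_has_integral_lebesgue'[OF _ has_integral_powr_from_0[OF assms, of R]]
    by (simp add: R_def)
  have "(\<integral>\<^sup>+y\<in>{c..d}. ennreal (\<bar>y - b\<bar> powr e) \<partial>lborel)
     \<le> (\<integral>\<^sup>+y. ennreal (\<bar>y - b\<bar> powr e) * indicator {-R..R} (y - b) \<partial>lborel)"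
    by (intro nn_integral_mono) (auto simp: indicator_def R_def)
  also have "\<dots> = (\<integral>\<^sup>+z\<in>{-R..R}. ennreal (\<bar>z\<bar> powr e) \<partial>lborel)"
    by (subst nn_integral_lborel_translate[where c = "-b"]) auto
  also have "\<dots> \<le> (\<integral>\<^sup>+z\<in>{0..R}. ennreal (z powr e) \<partial>lborel)
      + (\<integral>\<^sup>+z\<in>{0..R}. ennreal (z powr e) \<partial>lborel)"
    by (rule order_trans[OF nn_integral_lborel_le_halflines], measurable)
       (intro add_mono nn_integral_mono; auto simp: indicator_def)
  finally show ?thesis
    using half by (simp add: ennreal_add_eq_top order_le_less_trans)
qed

lemma abs_powr_nn_integral_far_finite:
  fixes e r :: real
  assumes "e < -1" "r > 0"
  shows "(\<integral>\<^sup>+z\<in>{z. r \<le> \<bar>z\<bar>}. ennreal (\<bar>z\<bar> powr e) \<partial>lborel) < \<infinity>"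
proof -
  have half: "(\<integral>\<^sup>+z\<in>{r..}. ennreal (z powr e) \<partial>lborel) < \<infinity>"
    using nn_integral_has_integral_lebesgue'[OF _ has_integral_powr_to_inf[OF assms]] by simp
  have "(\<integral>\<^sup>+z\<in>{z. r \<le> \<bar>z\<bar>}. ennreal (\<bar>z\<bar> powr e) \<partial>lborel)
     \<le> (\<integral>\<^sup>+z\<in>{r..}. ennreal (z powr e) \<partial>lborel)
      + (\<integral>\<^sup>+z\<in>{r..}. ennreal (z powr e) \<partial>lborel)"
    by (rule order_trans[OF nn_integral_lborel_le_halflines], measurable)
       (intro add_mono nn_integral_mono; use assms in \<open>auto simp: indicator_def\<close>)
  then show ?thesis
    using half by (simp add: ennreal_add_eq_top order_le_less_trans)
qed

lemma nn_integral_interaction_reflect_le: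
  fixes q \<alpha> \<beta> c :: real and B G :: "real set"
  assumes [measurable]: "B \<in> sets borel" "G \<in> sets borel"
    and BG: "\<And>y. y \<in> B \<Longrightarrow> \<alpha> + \<beta> - y \<in> G \<or> \<alpha> + \<beta> - y = c"
  shows "(\<integral>\<^sup>+t\<in>{\<alpha>..<\<beta>}. (\<integral>\<^sup>+y\<in>B. ennreal (\<bar>t - y\<bar> powr (- q)) \<partial>lborel) \<partial>lborel)
    \<le> (\<integral>\<^sup>+t\<in>{\<alpha>..<\<beta>}. (\<integral>\<^sup>+y\<in>G. ennreal (\<bar>t - y\<bar> powr (- q)) \<partial>lborel) \<partial>lborel)"
proof -
  define W where "W A t = (\<integral>\<^sup>+y\<in>A. ennreal (\<bar>t - y\<bar> powr (- q)) \<partial>lborel)" for A t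
  have [measurable]: "W B \<in> borel_measurable borel" "W G \<in> borel_measurable borel"
    unfolding W_def by measurable
  have inner: "W B (\<alpha> + \<beta> - t) \<le> W G t" for t
  proof -
    have "W B (\<alpha> + \<beta> - t) = (\<integral>\<^sup>+y. ennreal (\<bar>t - y\<bar> powr (- q)) * indicator B (\<alpha> + \<beta> - y) \<partial>lborel)"
      unfolding W_def
      using nn_integral_lborel_reflect_at[of "\<lambda>y. ennreal (\<bar>\<alpha> + \<beta> - t - y\<bar> powr (- q)) * indicator B y" "\<alpha> + \<beta>"]
      by (simp add: abs_minus_commute)
    also have "\<dots> \<le> W G t"
      unfolding W_def
      by (intro nn_integral_mono_AE, use AE_lborel_singleton[of c] in eventually_elim)
         (auto simp: indicator_def abs_minus_commute dest: BG)
    finally show ?thesis .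
  qed
  have "(\<integral>\<^sup>+t\<in>{\<alpha>..<\<beta>}. W B t \<partial>lborel)
      = (\<integral>\<^sup>+t. W B (\<alpha> + \<beta> - t) * indicator {\<alpha>..<\<beta>} (\<alpha> + \<beta> - t) \<partial>lborel)"
    using nn_integral_lborel_reflect_at[of "\<lambda>t. W B t * indicator {\<alpha>..<\<beta>} t" "\<alpha> + \<beta>"] by simp
  also have "\<dots> \<le> (\<integral>\<^sup>+t\<in>{\<alpha>..<\<beta>}. W G t \<partial>lborel)"
    by (intro nn_integral_mono_AE, use AE_lborel_singleton[of \<beta>] in eventually_elim)
       (auto simp: indicator_def inner)
  finally show ?thesis unfolding W_def .
qed

section \<open>Integrals of periodic functions\<close>

lemma periodic_add_of_int_mult:
  fixes \<phi> :: "real \<Rightarrow> 'a"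
  assumes per: "\<And>t. \<phi> (t + T) = \<phi> t"
  shows "\<phi> (t + real_of_int k * T) = \<phi> t"
proof -
  have nat_mult: "\<phi> (t + real n * T) = \<phi> t" for t n
    by (induction n arbitrary: t) (auto simp: distrib_right add.assoc[symmetric] per)
  show ?thesis
  proof (cases "k \<ge> 0")
    case True
    then show ?thesis using nat_mult[of t "nat k"] by simp
  next
    case False
    have "\<phi> (t + real_of_int k * T) = \<phi> (t + real_of_int k * T + real (nat (-k)) * T)"
      by (rule nat_mult[symmetric])
    then show ?thesis using False by simp
  qed
qed

lemma nn_integral_periodic_interval:
  fixes \<phi> :: "real \<Rightarrow> ennreal"
  assumes [measurable]: "\<phi> \<in> borel_measurable borel" and T: "T > 0" and per: "\<And>t. \<phi> (t + T) = \<phi> t"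
  shows "(\<integral>\<^sup>+t\<in>{c..<c+T}. \<phi> t \<partial>lborel) = (\<integral>\<^sup>+t\<in>{0..<T}. \<phi> t \<partial>lborel)"
proof -
  define n where "n = \<lfloor>c / T\<rfloor>"
  define r where "r = c - real_of_int n * T"
  have r: "0 \<le> r" "r < T"
  proof -
    have "real_of_int n \<le> c / T" "c / T < real_of_int n + 1" unfolding n_def by linarith+
    then show "0 \<le> r" "r < T" using T unfolding r_def by (auto simp: field_simps)
  qed
  have "(\<integral>\<^sup>+t\<in>{c..<c+T}. \<phi> t \<partial>lborel)
      = (\<integral>\<^sup>+t. \<phi> (t + real_of_int n * T) * indicator {c..<c+T} (t + real_of_int n * T) \<partial>lborel)"
    by (rule nn_integral_lborel_translate) measurable
  also have "\<dots> = (\<integral>\<^sup>+t\<in>{r..<r+T}. \<phi> t \<partial>lborel)"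
    by (intro nn_integral_cong) (auto simp: periodic_add_of_int_mult[where \<phi> = \<phi>, OF per] r_def indicator_def)
  also have "\<dots> = (\<integral>\<^sup>+t. \<phi> t * indicator {r..<T} t + \<phi> t * indicator {T..<T+r} t \<partial>lborel)"
    using r by (intro nn_integral_cong) (auto simp: indicator_def)
  also have "\<dots> = (\<integral>\<^sup>+t\<in>{r..<T}. \<phi> t \<partial>lborel) + (\<integral>\<^sup>+t\<in>{T..<T+r}. \<phi> t \<partial>lborel)"
    by (rule nn_integral_add) auto
  also have "(\<integral>\<^sup>+t\<in>{T..<T+r}. \<phi> t \<partial>lborel) = (\<integral>\<^sup>+t. \<phi> (t + T) * indicator {T..<T+r} (t + T) \<partial>lborel)"
    by (rule nn_integral_lborel_translate) measurable
  also have "\<dots> = (\<integral>\<^sup>+t\<in>{0..<r}. \<phi> t \<partial>lborel)"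
    by (intro nn_integral_cong) (auto simp: per indicator_def)
  also have "(\<integral>\<^sup>+t\<in>{r..<T}. \<phi> t \<partial>lborel) + (\<integral>\<^sup>+t\<in>{0..<r}. \<phi> t \<partial>lborel)
      = (\<integral>\<^sup>+t. \<phi> t * indicator {r..<T} t + \<phi> t * indicator {0..<r} t \<partial>lborel)"
    by (rule nn_integral_add[symmetric]) auto
  also have "\<dots> = (\<integral>\<^sup>+t\<in>{0..<T}. \<phi> t \<partial>lborel)"
    using r by (intro nn_integral_cong) (auto simp: indicator_def)
  finally show ?thesis .
qed

lemma measurable_linear_pair:
  fixes G :: "real \<Rightarrow> real \<Rightarrow> ennreal"
  assumes "case_prod G \<in> borel_measurable (lborel \<Otimes>\<^sub>M lborel)"
  shows "(\<lambda>(t, z). G (a * t + b * z) (c * t + d * z)) \<in> borel_measurable (lborel \<Otimes>\<^sub>M lborel)"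
proof -
  have "(\<lambda>(t::real, z::real). (a * t + b * z, c * t + d * z)) \<in> lborel \<Otimes>\<^sub>M lborel \<rightarrow>\<^sub>M lborel \<Otimes>\<^sub>M lborel"
    by measurable
  from measurable_comp[OF this assms] show ?thesis by (simp add: o_def case_prod_unfold)
qed

lemma nn_integral_interval_diagonal:
  fixes G :: "real \<Rightarrow> real \<Rightarrow> ennreal"
  assumes G: "case_prod G \<in> borel_measurable (lborel \<Otimes>\<^sub>M lborel)"
  shows "(\<integral>\<^sup>+t\<in>{0..<T}. (\<integral>\<^sup>+y. G t y \<partial>lborel) \<partial>lborel)
    = (\<integral>\<^sup>+z. (\<integral>\<^sup>+t\<in>{0..<T}. G t (t + z) \<partial>lborel) \<partial>lborel)"
proof -
  have [measurable]: "(\<lambda>(t, z). G t (t + z)) \<in> borel_measurable (lborel \<Otimes>\<^sub>M lborel)"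
    using measurable_linear_pair[OF G, of 1 0 1 1] by simp
  have "(\<integral>\<^sup>+y. G t y \<partial>lborel) = (\<integral>\<^sup>+z. G t (t + z) \<partial>lborel)" for t
    using nn_integral_lborel_translate[of "G t" t] measurable_Pair2[OF G, of t]
    by (simp add: add.commute cong: measurable_cong_sets)
  then have "(\<integral>\<^sup>+t\<in>{0..<T}. (\<integral>\<^sup>+y. G t y \<partial>lborel) \<partial>lborel)
      = (\<integral>\<^sup>+t. (\<integral>\<^sup>+z. G t (t + z) * indicator {0..<T} t \<partial>lborel) \<partial>lborel)"
    by (simp add: nn_integral_multc)
  also have "\<dots> = (\<integral>\<^sup>+z. (\<integral>\<^sup>+t\<in>{0..<T}. G t (t + z) \<partial>lborel) \<partial>lborel)"
    by (rule lborel_pair.Fubini'[symmetric]) measurable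
  finally show ?thesis .
qed

lemma nn_integral_periodic_swap:
  fixes G :: "real \<Rightarrow> real \<Rightarrow> ennreal"
  assumes G: "case_prod G \<in> borel_measurable (lborel \<Otimes>\<^sub>M lborel)" and T: "T > 0"
    and per: "\<And>t y. G (t + T) (y + T) = G t y"
  shows "(\<integral>\<^sup>+t\<in>{0..<T}. (\<integral>\<^sup>+y. G t y \<partial>lborel) \<partial>lborel)
       = (\<integral>\<^sup>+t\<in>{0..<T}. (\<integral>\<^sup>+y. G y t \<partial>lborel) \<partial>lborel)"
proof -
  have [measurable]: "(\<lambda>(t, z). G (t - z) t) \<in> borel_measurable (lborel \<Otimes>\<^sub>M lborel)"
    "(\<lambda>(t, z). G t (t + z)) \<in> borel_measurable (lborel \<Otimes>\<^sub>M lborel)"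
    using measurable_linear_pair[OF G, of 1 "-1" 1 0] measurable_linear_pair[OF G, of 1 0 1 1] by simp_all
  have shift: "(\<integral>\<^sup>+t\<in>{0..<T}. G t (t + z) \<partial>lborel) = (\<integral>\<^sup>+t\<in>{0..<T}. G (t - z) t \<partial>lborel)" for z
  proof -
    have "(\<integral>\<^sup>+t\<in>{0..<T}. G t (t + z) \<partial>lborel)
        = (\<integral>\<^sup>+t. G (t + - z) (t + - z + z) * indicator {0..<T} (t + - z) \<partial>lborel)"
      by (rule nn_integral_lborel_translate) measurable
    also have "\<dots> = (\<integral>\<^sup>+t\<in>{z..<z + T}. G (t - z) t \<partial>lborel)"
      by (intro nn_integral_cong) (auto simp: indicator_def)
    also have "\<dots> = (\<integral>\<^sup>+t\<in>{0..<T}. G (t - z) t \<partial>lborel)"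
      by (rule nn_integral_periodic_interval[OF _ T]) (measurable, metis per diff_add_eq)
    finally show ?thesis .
  qed
  have "(\<integral>\<^sup>+t\<in>{0..<T}. (\<integral>\<^sup>+y. G t y \<partial>lborel) \<partial>lborel)
      = (\<integral>\<^sup>+z. (\<integral>\<^sup>+t\<in>{0..<T}. G (t - z) t \<partial>lborel) \<partial>lborel)"
    by (simp add: nn_integral_interval_diagonal[OF G] shift)
  also have "\<dots> = (\<integral>\<^sup>+z. (\<integral>\<^sup>+t\<in>{0..<T}. G (t + z) t \<partial>lborel) \<partial>lborel)"
    using nn_integral_lborel_reflect[of "\<lambda>z. \<integral>\<^sup>+t\<in>{0..<T}. G (t - z) t \<partial>lborel"] by simp
  also have "\<dots> = (\<integral>\<^sup>+t\<in>{0..<T}. (\<integral>\<^sup>+y. G y t \<partial>lborel) \<partial>lborel)"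
    using nn_integral_interval_diagonal[of "\<lambda>t y. G y t" T] measurable_linear_pair[OF G, of 0 1 1 0]
    by simp
  finally show ?thesis .
qed

lemma nn_integral_periodic_split_by_label:
  fixes K :: "real \<Rightarrow> real \<Rightarrow> ennreal" and D :: "real \<Rightarrow> real" and T :: real
  assumes Km[measurable]: "case_prod K \<in> borel_measurable (lborel \<Otimes>\<^sub>M lborel)" and T: "T > 0"
    and Ksym: "\<And>t y. K t y = K y t" and Kper: "\<And>t y. K (t + T) (y + T) = K t y"
    and Dm[measurable]: "D \<in> borel_measurable borel" and Dper: "\<And>t. D (t + T) = D t"
    and D_cases: "\<And>t y. D t \<noteq> D y \<Longrightarrow> (D t \<noteq> 0 \<and> D y = 0) \<or> (D t = 0 \<and> D y \<noteq> 0)"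
  shows "(\<integral>\<^sup>+t\<in>{0..<T}. (\<integral>\<^sup>+y. K t y \<partial>lborel) \<partial>lborel)
       = (\<integral>\<^sup>+t\<in>{0..<T}. (\<integral>\<^sup>+y. K t y * of_bool (D t = D y) \<partial>lborel) \<partial>lborel)
         + 2 * (\<integral>\<^sup>+t\<in>{c..<c+T}. (\<integral>\<^sup>+y. K t y * of_bool (D t \<noteq> 0 \<and> D y = 0) \<partial>lborel) \<partial>lborel)"
proof -
  let ?E = "\<lambda>t y. K t y * of_bool (D t = D y)"
  let ?P = "\<lambda>t y. K t y * of_bool (D t \<noteq> 0 \<and> D y = 0)"
  let ?Q = "\<lambda>t y. K t y * of_bool (D t = 0 \<and> D y \<noteq> 0)"
  have mE[measurable]: "case_prod ?E \<in> borel_measurable (lborel \<Otimes>\<^sub>M lborel)" by measurable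
  have mP[measurable]: "case_prod ?P \<in> borel_measurable (lborel \<Otimes>\<^sub>M lborel)" by measurable
  have mQ[measurable]: "case_prod ?Q \<in> borel_measurable (lborel \<Otimes>\<^sub>M lborel)" by measurable
  have split: "K t y = ?E t y + ?P t y + ?Q t y" for t y
    using D_cases[of t y] by (cases "D t = D y") auto
  have "(\<integral>\<^sup>+t\<in>{0..<T}. (\<integral>\<^sup>+y. K t y \<partial>lborel) \<partial>lborel)
      = (\<integral>\<^sup>+t\<in>{0..<T}. (\<integral>\<^sup>+y. ?E t y + ?P t y + ?Q t y \<partial>lborel) \<partial>lborel)"
    by (simp only: split[symmetric])
  also have "\<dots> = (\<integral>\<^sup>+t\<in>{0..<T}. (\<integral>\<^sup>+y. ?E t y \<partial>lborel) \<partial>lborel)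
     + (\<integral>\<^sup>+t\<in>{0..<T}. (\<integral>\<^sup>+y. ?P t y \<partial>lborel) \<partial>lborel)
     + (\<integral>\<^sup>+t\<in>{0..<T}. (\<integral>\<^sup>+y. ?Q t y \<partial>lborel) \<partial>lborel)"
    by (simp add: nn_integral_add distrib_right)
  also have "(\<integral>\<^sup>+t\<in>{0..<T}. (\<integral>\<^sup>+y. ?Q t y \<partial>lborel) \<partial>lborel)
     = (\<integral>\<^sup>+t\<in>{0..<T}. (\<integral>\<^sup>+y. ?Q y t \<partial>lborel) \<partial>lborel)"
    by (rule nn_integral_periodic_swap[OF mQ T]) (simp add: Kper Dper)
  also have "(\<lambda>t. (\<integral>\<^sup>+y. ?Q y t \<partial>lborel)) = (\<lambda>t. (\<integral>\<^sup>+y. ?P t y \<partial>lborel))"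
    by (intro ext nn_integral_cong) (simp add: Ksym)
  also have "(\<integral>\<^sup>+t\<in>{0..<T}. (\<integral>\<^sup>+y. ?P t y \<partial>lborel) \<partial>lborel)
      = (\<integral>\<^sup>+t\<in>{c..<c+T}. (\<integral>\<^sup>+y. ?P t y \<partial>lborel) \<partial>lborel)"
  proof (rule nn_integral_periodic_interval[symmetric, OF _ T])
    show "(\<lambda>t. \<integral>\<^sup>+y. ?P t y \<partial>lborel) \<in> borel_measurable borel" by measurable
    fix t
    have "(\<integral>\<^sup>+y. ?P (t + T) y \<partial>lborel) = (\<integral>\<^sup>+y. ?P (t + T) (y + T) \<partial>lborel)"
      by (rule nn_integral_lborel_translate) measurable
    then show "(\<integral>\<^sup>+y. ?P (t + T) y \<partial>lborel) = (\<integral>\<^sup>+y. ?P t y \<partial>lborel)"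
      by (simp add: Kper Dper)
  qed
  finally show ?thesis by (simp add: add.assoc mult_2)
qed

section \<open>The energy as a Lebesgue integral\<close>

definition gagliardo_kernel :: "real \<Rightarrow> real \<Rightarrow> nat \<Rightarrow> (nat \<Rightarrow> real) \<Rightarrow> real \<Rightarrow> real \<Rightarrow> ennreal" where
  "gagliardo_kernel s p T x t y =
     ennreal (\<bar>u_conf T x t - u_conf T x y\<bar> powr p / \<bar>t - y\<bar> powr (1 + s * p))"

definition energy_nn :: "real \<Rightarrow> real \<Rightarrow> nat \<Rightarrow> (nat \<Rightarrow> real) \<Rightarrow> ennreal" where
  "energy_nn s p T x = (\<integral>\<^sup>+t\<in>{0..<real T}. (\<integral>\<^sup>+y. gagliardo_kernel s p T x t y \<partial>lborel) \<partial>lborel)"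

lemma F_energy_eq_enn2real: "F_energy s p T x = enn2real (energy_nn s p T x)"
  unfolding F_energy_def energy_nn_def gagliardo_kernel_def by simp

lemma u_conf_measurable [measurable]: "u_conf T x \<in> borel_measurable borel"
  unfolding u_conf_def by measurable

lemma gagliardo_kernel_measurable [measurable]:
  "case_prod (gagliardo_kernel s p T x) \<in> borel_measurable (lborel \<Otimes>\<^sub>M lborel)"
  unfolding gagliardo_kernel_def by measurable

lemma gagliardo_kernel_measurable_snd [measurable]:
  "gagliardo_kernel s p T x t \<in> borel_measurable borel"
  unfolding gagliardo_kernel_def by measurable

lemma gagliardo_kernel_commute: "gagliardo_kernel s p T x t y = gagliardo_kernel s p T x y t"
  unfolding gagliardo_kernel_def by (simp add: abs_minus_commute)

lemma u_conf_add_period: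
  assumes "T > 0"
  shows "u_conf T x (y + real T) = u_conf T x y"
proof -
  have "\<lfloor>(y + real T - x j) / real T\<rfloor> = \<lfloor>(y - x j) / real T\<rfloor> + 1" for j
  proof -
    have "(y + real T - x j) / real T = (y - x j) / real T + 1"
      using assms by (simp add: field_simps)
    then show ?thesis by simp
  qed
  then show ?thesis unfolding u_conf_def by (simp add: sum.distrib)
qed

lemma gagliardo_kernel_add_period:
  "T > 0 \<Longrightarrow> gagliardo_kernel s p T x (t + real T) (y + real T) = gagliardo_kernel s p T x t y"
  unfolding gagliardo_kernel_def by (simp add: u_conf_add_period)

lemma u_conf_oscillation:
  assumes T: "T > 0"
  shows "\<bar>u_conf T x t - u_conf T x y\<bar> < real T"
proof -
  define c where "c = (\<Sum>j\<in>{1..T}. x j) / real T"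
  have "c \<le> u_conf T x z \<and> u_conf T x z < c + real T" for z
  proof -
    have "(\<Sum>j\<in>{1..T}. real_of_int \<lfloor>(z - x j) / real T\<rfloor>) \<le> (\<Sum>j\<in>{1..T}. (z - x j) / real T)"
      by (intro sum_mono) simp
    moreover have "(\<Sum>j\<in>{1..T}. (z - x j) / real T - 1) < (\<Sum>j\<in>{1..T}. real_of_int \<lfloor>(z - x j) / real T\<rfloor>)"
      using T by (intro sum_strict_mono) (auto simp: real_of_int_floor_gt_diff_one)
    moreover have "(\<Sum>j\<in>{1..T}. (z - x j) / real T) = z - c"
      using T by (simp add: c_def sum_divide_distrib[symmetric] sum_subtractf diff_divide_distrib)
    ultimately show ?thesis unfolding u_conf_def by (simp add: sum_subtractf)
  qed
  from this[of t] this[of y] show ?thesis by linarith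
qed

lemma gagliardo_kernel_le_far:
  assumes "T > 0" "p > 0"
  shows "gagliardo_kernel s p T x t y \<le> ennreal (real T powr p * \<bar>t - y\<bar> powr (- (1 + s * p)))"
proof -
  have "\<bar>u_conf T x t - u_conf T x y\<bar> powr p \<le> real T powr p"
    using u_conf_oscillation[OF assms(1), of x t y] assms(2) by (intro powr_mono2) auto
  then have "\<bar>u_conf T x t - u_conf T x y\<bar> powr p / \<bar>t - y\<bar> powr (1 + s * p)
      \<le> real T powr p / \<bar>t - y\<bar> powr (1 + s * p)"
    by (intro divide_right_mono) auto
  then show ?thesis
    unfolding gagliardo_kernel_def by (intro ennreal_leI) (simp only: powr_minus_divide, simp)
qed

section \<open>Finiteness of the energy\<close>

lemma floor_divide_neq_imp_lattice_point_between:
  fixes T :: real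
  assumes T: "T > 0" and ne: "\<lfloor>(t - z) / T\<rfloor> \<noteq> \<lfloor>(y - z) / T\<rfloor>"
  shows "\<exists>k::int. min t y < z + real_of_int k * T \<and> z + real_of_int k * T \<le> max t y"
proof -
  define k where "k = \<lfloor>(max t y - z) / T\<rfloor>"
  have "\<lfloor>(min t y - z) / T\<rfloor> \<le> k" unfolding k_def
    by (intro floor_mono divide_right_mono) (use T in auto)
  moreover have "\<lfloor>(min t y - z) / T\<rfloor> \<noteq> k" using ne unfolding k_def
    by (cases "t \<le> y") (auto simp: min_def max_def)
  ultimately have "\<lfloor>(min t y - z) / T\<rfloor> < k" by simp
  then have "(min t y - z) / T < real_of_int k" by (simp add: floor_less_iff)
  then have "min t y < z + real_of_int k * T" using T by (simp add: field_simps)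
  moreover have "real_of_int k \<le> (max t y - z) / T" unfolding k_def by linarith
  then have "z + real_of_int k * T \<le> max t y" using T by (simp add: field_simps)
  ultimately show ?thesis by blast
qed

text \<open>The weight is \<open>\<infinity>\<close> at the singularity itself, so that products of weights bound the
  kernel everywhere and not only almost everywhere.\<close>

definition sing_weight :: "real \<Rightarrow> real \<Rightarrow> real \<Rightarrow> ennreal" where
  "sing_weight e b z = (if z = b then \<infinity> else ennreal (\<bar>z - b\<bar> powr e))"

lemma sing_weight_measurable [measurable]: "sing_weight e b \<in> borel_measurable borel"
  unfolding sing_weight_def by measurable

lemma sing_weight_nn_integral_finite:
  assumes "e > -1"
  shows "(\<integral>\<^sup>+y\<in>{c..d}. sing_weight e b y \<partial>lborel) < \<infinity>"
proof -
  have "(\<integral>\<^sup>+y\<in>{c..d}. sing_weight e b y \<partial>lborel) = (\<integral>\<^sup>+y\<in>{c..d}. ennreal (\<bar>y - b\<bar> powr e) \<partial>lborel)"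
    by (intro nn_integral_cong_AE, rule eventually_mono[OF AE_lborel_singleton[of b]])
       (simp add: sing_weight_def)
  then show ?thesis using abs_powr_nn_integral_near_finite[OF assms] by simp
qed

text \<open>If a jump point \<open>b\<close> of \<open>u_conf\<close> lies between \<open>t\<close> and \<open>y\<close>, then
  \<open>\<bar>t - b\<bar>, \<bar>y - b\<bar> \<le> \<bar>t - y\<bar>\<close> splits the singularity \<open>\<bar>t - y\<bar>\<^sup>-\<^sup>1\<^sup>-\<^sup>s\<^sup>p\<close> into two factors, which are
  integrable because \<open>s p < 1\<close>.\<close>

lemma gagliardo_kernel_le_sing_weight:
  assumes T: "T > 0" and s: "s \<ge> 0" and p: "p > 0" and b: "min t y < b" "b \<le> max t y"
  defines "e \<equiv> - (1 + s * p) / 2"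
  shows "gagliardo_kernel s p T x t y \<le> ennreal (real T powr p) * sing_weight e b t * sing_weight e b y"
proof (cases "t = b \<or> y = b")
  case True
  have "sing_weight e b t \<noteq> 0" "sing_weight e b y \<noteq> 0" "ennreal (real T powr p) \<noteq> 0"
    using T by (auto simp: sing_weight_def)
  then have "ennreal (real T powr p) * sing_weight e b t * sing_weight e b y = \<infinity>"
    using True by (auto simp: sing_weight_def ennreal_mult_top ennreal_top_mult)
  then show ?thesis by simp
next
  case False
  define q where "q = 1 + s * p"
  have q: "q > 0" "e = - q / 2" using s p by (simp_all add: q_def e_def add_pos_nonneg)
  have d: "0 < \<bar>t - b\<bar>" "\<bar>t - b\<bar> \<le> \<bar>t - y\<bar>" "0 < \<bar>y - b\<bar>" "\<bar>y - b\<bar> \<le> \<bar>t - y\<bar>"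
    using False b by (auto simp: min_def max_def split: if_splits)
  have "\<bar>t - b\<bar> powr (q/2) * \<bar>y - b\<bar> powr (q/2) \<le> \<bar>t - y\<bar> powr (q/2) * \<bar>t - y\<bar> powr (q/2)"
    using d q by (intro mult_mono powr_mono2) auto
  also have "\<dots> = \<bar>t - y\<bar> powr q" by (simp flip: powr_add)
  finally have split: "\<bar>t - b\<bar> powr (q/2) * \<bar>y - b\<bar> powr (q/2) \<le> \<bar>t - y\<bar> powr q" .
  have "\<bar>u_conf T x t - u_conf T x y\<bar> powr p \<le> real T powr p"
    using u_conf_oscillation[OF T, of x t y] p by (intro powr_mono2) auto
  then have "\<bar>u_conf T x t - u_conf T x y\<bar> powr p / \<bar>t - y\<bar> powr q
      \<le> real T powr p / (\<bar>t - b\<bar> powr (q/2) * \<bar>y - b\<bar> powr (q/2))"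
    using split d by (intro frac_le) auto
  also have "\<dots> = real T powr p * \<bar>t - b\<bar> powr e * \<bar>y - b\<bar> powr e"
    by (simp add: q(2) powr_minus_divide)
  finally show ?thesis
    using False unfolding gagliardo_kernel_def q_def[symmetric]
    by (simp add: sing_weight_def ennreal_mult[symmetric] ennreal_leI)
qed

definition kernel_profile :: "real \<Rightarrow> real \<Rightarrow> nat \<Rightarrow> real \<Rightarrow> ennreal" where
  "kernel_profile s p T z =
     ennreal (\<bar>z\<bar> powr (p - (1 + s * p))) * indicator {-1..1} z
     + ennreal (real T powr p * \<bar>z\<bar> powr (- (1 + s * p))) * indicator {z. 1 \<le> \<bar>z\<bar>} z"

lemma kernel_profile_measurable [measurable]: "kernel_profile s p T \<in> borel_measurable borel"
  unfolding kernel_profile_def by measurable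

lemma kernel_profile_nn_integral_finite:
  assumes "0 < s" "s < 1" "p > 0"
  shows "(\<integral>\<^sup>+z. kernel_profile s p T z \<partial>lborel) < \<infinity>"
proof -
  have "(\<integral>\<^sup>+z. kernel_profile s p T z \<partial>lborel)
      = (\<integral>\<^sup>+z\<in>{-1..1}. ennreal (\<bar>z - 0\<bar> powr (p - (1 + s * p))) \<partial>lborel)
        + ennreal (real T powr p) * (\<integral>\<^sup>+z\<in>{z. 1 \<le> \<bar>z\<bar>}. ennreal (\<bar>z\<bar> powr (- (1 + s * p))) \<partial>lborel)"
    unfolding kernel_profile_def
    by (subst nn_integral_add, measurable, subst nn_integral_cmult[symmetric], measurable)
       (simp add: ennreal_mult mult.assoc)
  moreover have "p - (1 + s * p) > -1" "- (1 + s * p) < -1"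
    using assms by (simp_all add: algebra_simps)
  ultimately show ?thesis
    using abs_powr_nn_integral_near_finite[of "p - (1 + s * p)" 0 "-1" 1]
      abs_powr_nn_integral_far_finite[of "- (1 + s * p)" 1]
    by (simp add: ennreal_mult_less_top)
qed

definition near_jump_points :: "nat \<Rightarrow> (nat \<Rightarrow> real) \<Rightarrow> real set" where
  "near_jump_points T x = (\<lambda>(j, k). x j + real_of_int k * real T) ` ({1..T} \<times> {-1, 0, 1})"

lemma finite_near_jump_points [simp]: "finite (near_jump_points T x)"
  unfolding near_jump_points_def by simp

lemma near_jump_pointsI:
  assumes "j \<in> {1..T}" "0 \<le> x j" "x j < real T"
    and "-1 < x j + real_of_int k * real T" "x j + real_of_int k * real T < real T + 1"
  shows "x j + real_of_int k * real T \<in> near_jump_points T x"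
proof -
  have T: "real T > 0" "real T \<ge> 1" using assms(1) by auto
  then have "(-2) * real T < real_of_int k * real T \<and> real_of_int k * real T < 2 * real T"
    using assms by linarith
  then have "-2 < real_of_int k \<and> real_of_int k < 2"
    by (simp only: mult_less_cancel_right_pos[OF T(1)])
  then have "k \<in> {-1, 0, 1}" by auto
  then show ?thesis unfolding near_jump_points_def using assms(1) by force
qed

lemma gagliardo_kernel_le_sum:
  fixes x :: "nat \<Rightarrow> real"
  assumes T: "T > 0" and s: "s > 0" and p: "p > 0" and x: "\<forall>j\<in>{1..T}. 0 \<le> x j \<and> x j < real T"
    and t: "t \<in> {0..<real T}"
  defines "e \<equiv> - (1 + s * p) / 2"
  shows "gagliardo_kernel s p T x t y
    \<le> kernel_profile s p T (y - t)
      + (\<Sum>b\<in>near_jump_points T x.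
           ennreal (real T powr p) * sing_weight e b t * sing_weight e b y * indicator {-1..real T + 1} y)"
    (is "_ \<le> _ + ?sing")
proof (cases "\<bar>y - t\<bar> < 1 \<and> t \<noteq> y")
  case False
  then have "gagliardo_kernel s p T x t y
      \<le> ennreal (real T powr p * \<bar>y - t\<bar> powr (- (1 + s * p))) * indicator {z. 1 \<le> \<bar>z\<bar>} (y - t)"
    using gagliardo_kernel_le_far[OF T p, of s x t y]
    by (cases "t = y") (auto simp: gagliardo_kernel_def indicator_def abs_minus_commute)
  also have "\<dots> \<le> kernel_profile s p T (y - t)"
    unfolding kernel_profile_def by (rule add_increasing) simp_all
  finally show ?thesis by (simp add: add_increasing2)
next
  case near: True
  show ?thesis
  proof (cases "\<forall>j\<in>{1..T}. \<lfloor>(t - x j) / real T\<rfloor> = \<lfloor>(y - x j) / real T\<rfloor>")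
    case True
    then have "u_conf T x t - u_conf T x y = t - y" unfolding u_conf_def by simp
    then have "gagliardo_kernel s p T x t y \<le> kernel_profile s p T (y - t)"
      using near
      by (auto simp: gagliardo_kernel_def kernel_profile_def powr_diff abs_minus_commute abs_less_iff)
    then show ?thesis by (simp add: add_increasing2)
  next
    case False
    then obtain j where j: "j \<in> {1..T}" and ne: "\<lfloor>(t - x j) / real T\<rfloor> \<noteq> \<lfloor>(y - x j) / real T\<rfloor>"
      by blast
    obtain k :: int where k: "min t y < x j + real_of_int k * real T" "x j + real_of_int k * real T \<le> max t y"
      using floor_divide_neq_imp_lattice_point_between[of "real T" t "x j" y] ne T by auto
    have b: "x j + real_of_int k * real T \<in> near_jump_points T x"
      using k t near j x by (intro near_jump_pointsI) (auto simp: min_def max_def split: if_splits)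
    have "y \<in> {-1..real T + 1}" using t near by auto
    then have "gagliardo_kernel s p T x t y
        \<le> ennreal (real T powr p) * sing_weight e (x j + real_of_int k * real T) t
          * sing_weight e (x j + real_of_int k * real T) y * indicator {-1..real T + 1} y"
      using gagliardo_kernel_le_sing_weight[OF T _ p k] s by (simp add: e_def)
    also have "\<dots> \<le> ?sing"
      by (rule member_le_sum[OF b]) auto
    finally show ?thesis by (simp add: add_increasing)
  qed
qed

lemma gagliardo_kernel_inner_le:
  fixes x :: "nat \<Rightarrow> real"
  assumes T: "T > 0" and s: "s > 0" and p: "p > 0" and x: "\<forall>j\<in>{1..T}. 0 \<le> x j \<and> x j < real T"
    and t: "t \<in> {0..<real T}"
  defines "e \<equiv> - (1 + s * p) / 2"
  shows "(\<integral>\<^sup>+y. gagliardo_kernel s p T x t y \<partial>lborel)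
    \<le> (\<integral>\<^sup>+z. kernel_profile s p T z \<partial>lborel)
      + (\<Sum>b\<in>near_jump_points T x. ennreal (real T powr p)
           * (\<integral>\<^sup>+y\<in>{-1..real T + 1}. sing_weight e b y \<partial>lborel) * sing_weight e b t)"
proof -
  have "(\<integral>\<^sup>+y. gagliardo_kernel s p T x t y \<partial>lborel)
    \<le> (\<integral>\<^sup>+y. kernel_profile s p T (y - t) + (\<Sum>b\<in>near_jump_points T x. ennreal (real T powr p)
         * sing_weight e b t * (sing_weight e b y * indicator {-1..real T + 1} y)) \<partial>lborel)"
    using gagliardo_kernel_le_sum[OF T s p x t] by (intro nn_integral_mono) (simp add: e_def mult.assoc)
  also have "\<dots> = (\<integral>\<^sup>+y. kernel_profile s p T (y - t) \<partial>lborel)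
      + (\<Sum>b\<in>near_jump_points T x. ennreal (real T powr p) * sing_weight e b t
           * (\<integral>\<^sup>+y\<in>{-1..real T + 1}. sing_weight e b y \<partial>lborel))"
    by (simp add: nn_integral_add nn_integral_sum nn_integral_cmult)
  also have "(\<integral>\<^sup>+y. kernel_profile s p T (y - t) \<partial>lborel) = (\<integral>\<^sup>+z. kernel_profile s p T z \<partial>lborel)"
    by (subst nn_integral_lborel_translate[where c = t]) auto
  finally show ?thesis by (simp add: mult_ac)
qed

lemma energy_nn_finite:
  fixes x :: "nat \<Rightarrow> real"
  assumes T: "T > 0" and s: "0 < s" "s < 1" and p: "p > 0" and sp: "s * p < 1"
    and x: "\<forall>j\<in>{1..T}. 0 \<le> x j \<and> x j < real T"
  shows "energy_nn s p T x < \<infinity>"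
proof -
  define e where "e = - (1 + s * p) / 2"
  define c where "c b = ennreal (real T powr p) * (\<integral>\<^sup>+y\<in>{-1..real T + 1}. sing_weight e b y \<partial>lborel)" for b
  define M where "M = (\<integral>\<^sup>+z. kernel_profile s p T z \<partial>lborel)"
  have e: "e > -1" using sp unfolding e_def by simp
  have "energy_nn s p T x
      \<le> (\<integral>\<^sup>+t\<in>{0..<real T}. M + (\<Sum>b\<in>near_jump_points T x. c b * sing_weight e b t) \<partial>lborel)"
    unfolding energy_nn_def c_def M_def e_def using gagliardo_kernel_inner_le[OF T s(1) p x]
    by (intro nn_integral_mono) (auto simp: indicator_def)
  also have "\<dots> = (\<integral>\<^sup>+t. M * indicator {0..<real T} t
      + (\<Sum>b\<in>near_jump_points T x. c b * (sing_weight e b t * indicator {0..<real T} t)) \<partial>lborel)"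
    by (intro nn_integral_cong) (simp add: distrib_right sum_distrib_right mult.assoc)
  also have "\<dots> = M * ennreal (real T)
      + (\<Sum>b\<in>near_jump_points T x. c b * (\<integral>\<^sup>+t\<in>{0..<real T}. sing_weight e b t \<partial>lborel))"
    by (simp add: nn_integral_add nn_integral_sum nn_integral_cmult nn_integral_cmult_indicator)
  also have "\<dots> < \<infinity>"
  proof -
    have "(\<integral>\<^sup>+t\<in>{0..<real T}. sing_weight e b t \<partial>lborel) < \<infinity>" for b
      using sing_weight_nn_integral_finite[OF e, where c = 0 and d = "real T" and b = b]
      by (rule le_less_trans[rotated]) (intro nn_integral_mono, simp add: indicator_def)
    moreover have "M < \<infinity>" unfolding M_def using s p by (rule kernel_profile_nn_integral_finite)
    ultimately show ?thesis
      using sing_weight_nn_integral_finite[OF e] by (simp add: c_def ennreal_mult_less_top)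
  qed
  finally show ?thesis .
qed

section \<open>Reflection symmetry\<close>

text \<open>Reflecting a configuration turns the right-continuous \<open>u_conf\<close> into a left-continuous
  one, so the two agree only off the countable set of jump points.\<close>

lemma u_conf_reflect:
  assumes T: "T > 0"
    and y: "y \<notin> (\<lambda>(j, k::int). c - x j + real_of_int k * real T) ` UNIV"
  shows "u_conf T (\<lambda>j. c - x j) y = c + real T - u_conf T x (c - y)"
proof -
  have "\<lfloor>(c - y - x j) / real T\<rfloor> = - \<lfloor>(y - (c - x j)) / real T\<rfloor> - 1" for j
  proof -
    define a where "a = (y - (c - x j)) / real T"
    have "a \<noteq> of_int \<lfloor>a\<rfloor>"
    proof
      assume "a = of_int \<lfloor>a\<rfloor>"
      then have "y = c - x j + real_of_int \<lfloor>a\<rfloor> * real T" using T by (simp add: a_def field_simps)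
      then show False using y by auto
    qed
    moreover have "(c - y - x j) / real T = - a" unfolding a_def by (simp add: diff_divide_distrib)
    ultimately show ?thesis by (simp add: floor_minus ceiling_altdef a_def)
  qed
  then show ?thesis unfolding u_conf_def by (simp add: sum_subtractf sum_negf)
qed

lemma energy_nn_reflect:
  assumes T: "T > 0"
  shows "energy_nn s p T (\<lambda>j. c - x j) = energy_nn s p T x"
proof -
  define N where "N = (\<lambda>(j, k::int). c - x j + real_of_int k * real T) ` UNIV"
  define G where "G t = (\<integral>\<^sup>+y. gagliardo_kernel s p T x t y \<partial>lborel)" for t
  have [measurable]: "G \<in> borel_measurable borel" unfolding G_def by measurable
  have N: "AE y in lborel. y \<notin> N"
    unfolding N_def by (intro AE_not_in countable_imp_null_set_lborel) simp
  have kernel: "gagliardo_kernel s p T (\<lambda>j. c - x j) t y = gagliardo_kernel s p T x (c - t) (c - y)"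
    if "t \<notin> N" "y \<notin> N" for t y
    using that unfolding gagliardo_kernel_def N_def
    by (simp add: u_conf_reflect[OF T] abs_minus_commute)
  have inner: "(\<integral>\<^sup>+y. gagliardo_kernel s p T (\<lambda>j. c - x j) t y \<partial>lborel) = G (c - t)" if "t \<notin> N" for t
  proof -
    have "(\<integral>\<^sup>+y. gagliardo_kernel s p T (\<lambda>j. c - x j) t y \<partial>lborel)
        = (\<integral>\<^sup>+y. gagliardo_kernel s p T x (c - t) (c - y) \<partial>lborel)"
      by (intro nn_integral_cong_AE, use N in eventually_elim) (simp add: kernel that)
    also have "\<dots> = G (c - t)"
      unfolding G_def by (rule nn_integral_lborel_reflect_at) measurable
    finally show ?thesis .
  qed
  have G_periodic: "G (t + real T) = G t" for t
  proof -
    have "G (t + real T) = (\<integral>\<^sup>+y. gagliardo_kernel s p T x (t + real T) (y + real T) \<partial>lborel)"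
      unfolding G_def by (rule nn_integral_lborel_translate) measurable
    then show ?thesis unfolding G_def by (simp add: gagliardo_kernel_add_period[OF T])
  qed
  have "energy_nn s p T (\<lambda>j. c - x j) = (\<integral>\<^sup>+t\<in>{0..<real T}. G (c - t) \<partial>lborel)"
    unfolding energy_nn_def by (intro nn_integral_cong_AE, use N in eventually_elim) (simp add: inner)
  also have "\<dots> = (\<integral>\<^sup>+t. G t * indicator {0..<real T} (c - t) \<partial>lborel)"
    using nn_integral_lborel_reflect_at[of "\<lambda>t. G (c - t) * indicator {0..<real T} t" c] by simp
  also have "\<dots> = (\<integral>\<^sup>+t\<in>{c - real T..<c - real T + real T}. G t \<partial>lborel)"
    by (intro nn_integral_cong_AE, use AE_lborel_singleton[of c] AE_lborel_singleton[of "c - real T"]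
        in eventually_elim) (auto simp: indicator_def)
  also have "\<dots> = energy_nn s p T x"
    unfolding energy_nn_def G_def[symmetric] using T
    by (intro nn_integral_periodic_interval G_periodic) auto
  finally show ?thesis .
qed

lemma rigid_var_reflect: "rigid_var (\<lambda>j. c - x j) i (- h) = (\<lambda>j. c - rigid_var x i h j)"
  by (auto simp: rigid_var_def)

section \<open>Moving one point\<close>

text \<open>For \<open>h \<ge> 0\<close> this counts the points of \<open>a + T\<int>\<close> in \<open>(y - h, y]\<close>: it is the change of
  \<open>u_conf\<close> when the point \<open>a\<close> of the configuration moves to \<open>a + h\<close>.\<close>

definition jump_count :: "nat \<Rightarrow> real \<Rightarrow> real \<Rightarrow> real \<Rightarrow> real" where
  "jump_count T a h y = real_of_int \<lfloor>(y - a) / real T\<rfloor> - real_of_int \<lfloor>(y - a - h) / real T\<rfloor>"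

lemma jump_count_measurable [measurable]: "jump_count T a h \<in> borel_measurable borel"
  unfolding jump_count_def by measurable

lemma jump_count_add_period:
  assumes "T > 0"
  shows "jump_count T a h (y + real T) = jump_count T a h y"
proof -
  have "(y + real T - a) / real T = (y - a) / real T + 1" "(y + real T - a - h) / real T = (y - a - h) / real T + 1"
    using assms by (simp_all add: field_simps)
  then show ?thesis unfolding jump_count_def by simp
qed

lemma u_conf_rigid_var:
  assumes "i \<in> {1..T}"
  shows "u_conf T (rigid_var x i h) y = u_conf T x y + jump_count T (x i) h y"
proof -
  let ?f = "\<lambda>j. real_of_int \<lfloor>(y - x j) / real T\<rfloor>"
  let ?g = "\<lambda>j. real_of_int \<lfloor>(y - rigid_var x i h j) / real T\<rfloor>"
  have "(\<Sum>j\<in>{1..T}. ?g j) = ?g i + (\<Sum>j\<in>{1..T}-{i}. ?f j)"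
    using assms by (simp add: sum.remove rigid_var_def)
  moreover have "(\<Sum>j\<in>{1..T}. ?f j) = ?f i + (\<Sum>j\<in>{1..T}-{i}. ?f j)"
    using assms by (simp add: sum.remove)
  ultimately show ?thesis
    unfolding u_conf_def jump_count_def by (simp add: rigid_var_def algebra_simps)
qed

lemma floor_divide_eq_zero:
  fixes T z :: real
  shows "T > 0 \<Longrightarrow> 0 \<le> z \<Longrightarrow> z < T \<Longrightarrow> \<lfloor>z / T\<rfloor> = 0"
  by (simp add: floor_eq_iff)

lemma floor_divide_eq_minus_one:
  fixes T z :: real
  shows "T > 0 \<Longrightarrow> -T \<le> z \<Longrightarrow> z < 0 \<Longrightarrow> \<lfloor>z / T\<rfloor> = -1"
  by (simp add: floor_eq_iff field_simps)

lemma jump_count_eq_one: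
  assumes "T > 0" "0 < h" "h \<le> real T" "a \<le> t" "t < a + h"
  shows "jump_count T a h t = 1"
  using assms floor_divide_eq_zero[of "real T" "t - a"] floor_divide_eq_minus_one[of "real T" "t - a - h"]
  by (simp add: jump_count_def)

lemma jump_count_eq_zero:
  assumes "T > 0" "0 \<le> h" "h \<le> real T / 2" "a - real T / 2 \<le> t" "t < a + real T / 2" "t \<notin> {a..<a + h}"
  shows "jump_count T a h t = 0"
proof (cases "t < a")
  case True
  then show ?thesis
    using assms floor_divide_eq_minus_one[of "real T" "t - a"] floor_divide_eq_minus_one[of "real T" "t - a - h"]
    by (simp add: jump_count_def)
next
  case False
  then show ?thesis
    using assms floor_divide_eq_zero[of "real T" "t - a"] floor_divide_eq_zero[of "real T" "t - a - h"]
    by (simp add: jump_count_def)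
qed

lemma jump_count_cases:
  assumes "T > 0" "0 \<le> h" "h < real T"
  shows "jump_count T a h y \<in> {0, 1}"
proof -
  define A where "A = (y - a) / real T"
  have hT: "0 \<le> h / real T" "h / real T < 1" using assms by auto
  have "\<lfloor>A - h / real T\<rfloor> \<le> \<lfloor>A\<rfloor>" using hT by (intro floor_mono) simp
  moreover have "\<lfloor>A\<rfloor> \<le> \<lfloor>A - h / real T\<rfloor> + 1" using floor_mono[of A "A - h / real T + 1"] hT by simp
  moreover have "jump_count T a h y = real_of_int \<lfloor>A\<rfloor> - real_of_int \<lfloor>A - h / real T\<rfloor>"
    unfolding jump_count_def A_def by (simp add: diff_divide_distrib)
  ultimately show ?thesis by auto
qed

lemma floor_divide_near_point:
  assumes T: "T > 0" and b: "0 \<le> b" "b < real T" and a: "0 \<le> a" "a < real T"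
    and \<rho>: "\<rho> \<le> real T" "b \<noteq> a \<Longrightarrow> \<rho> \<le> \<bar>b - a\<bar> \<and> \<rho> \<le> real T - \<bar>b - a\<bar>"
    and w: "\<bar>w - a\<bar> < \<rho>"
  shows "real_of_int \<lfloor>(w - b) / real T\<rfloor>
    = (if b = a then (if w < a then -1 else 0) else (if b < a then 0 else -1))"
proof -
  have T': "real T > 0" using T by simp
  show ?thesis
  proof (cases "b = a")
    case True
    then show ?thesis
      using w \<rho> floor_divide_eq_zero[OF T', of "w - a"] floor_divide_eq_minus_one[OF T', of "w - a"] by auto
  next
    case False
    then have "\<rho> \<le> \<bar>b - a\<bar>" "\<rho> \<le> real T - \<bar>b - a\<bar>" using \<rho>(2) by auto
    then show ?thesis
      using False w floor_divide_eq_zero[OF T', of "w - b"] floor_divide_eq_minus_one[OF T', of "w - b"]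
      by (cases "b < a") auto
  qed
qed

lemma u_conf_diff_near_point:
  assumes T: "T > 0" and x: "\<forall>j\<in>{1..T}. 0 \<le> x j \<and> x j < real T" and a: "0 \<le> a" "a < real T"
    and \<rho>: "\<rho> \<le> real T" "\<forall>j\<in>{1..T}. x j \<noteq> a \<longrightarrow> \<rho> \<le> \<bar>x j - a\<bar> \<and> \<rho> \<le> real T - \<bar>x j - a\<bar>"
    and y: "\<bar>y - a\<bar> < \<rho>" and z: "\<bar>z - a\<bar> < \<rho>"
  shows "u_conf T x y - u_conf T x z = (y - z) + real (card {j\<in>{1..T}. x j = a}) * (of_bool (y < a) - of_bool (z < a))"
proof -
  have floor_diff: "real_of_int \<lfloor>(y - x j) / real T\<rfloor> - real_of_int \<lfloor>(z - x j) / real T\<rfloor>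
      = (if x j = a then of_bool (z < a) - of_bool (y < a) else 0)" if j: "j \<in> {1..T}" for j
  proof -
    have xj: "0 \<le> x j" "x j < real T" using x j by auto
    have "x j \<noteq> a \<Longrightarrow> \<rho> \<le> \<bar>x j - a\<bar> \<and> \<rho> \<le> real T - \<bar>x j - a\<bar>" using \<rho>(2) j by auto
    with floor_divide_near_point[OF T xj a \<rho>(1)] show ?thesis using y z by auto
  qed
  have "(\<Sum>j\<in>{1..T}. real_of_int \<lfloor>(y - x j) / real T\<rfloor>) - (\<Sum>j\<in>{1..T}. real_of_int \<lfloor>(z - x j) / real T\<rfloor>)
      = (\<Sum>j\<in>{1..T}. (if x j = a then of_bool (z < a) - of_bool (y < a) else 0))"
    by (simp add: sum_subtractf[symmetric] floor_diff)
  also have "\<dots> = (\<Sum>j\<in>{j\<in>{1..T}. x j = a}. of_bool (z < a) - of_bool (y < a))"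
    by (rule sym, rule sum.inter_filter) simp
  also have "\<dots> = real (card {j\<in>{1..T}. x j = a}) * (of_bool (z < a) - of_bool (y < a))"
    by simp
  finally show ?thesis unfolding u_conf_def by (simp add: algebra_simps)
qed

lemma eventually_at_right_zero_le:
  fixes v :: real
  assumes "v > 0"
  shows "\<forall>\<^sub>F \<rho> in at_right 0. 0 < \<rho> \<and> \<rho> \<le> v"
  unfolding eventually_at_right_field using assms by (intro exI[of _ v]) auto

lemma isolation_radius_eventually:
  fixes x :: "nat \<Rightarrow> real"
  assumes x: "\<forall>j\<in>{1..T}. 0 \<le> x j \<and> x j < real T" and a: "0 \<le> a" "a < real T"
  shows "\<forall>\<^sub>F \<rho> in at_right 0. \<forall>j\<in>{1..T}. x j \<noteq> a \<longrightarrow> \<rho> \<le> \<bar>x j - a\<bar> \<and> \<rho> \<le> real T - \<bar>x j - a\<bar>"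
proof (intro eventually_ball_finite ballI finite_atLeastAtMost)
  fix j assume j: "j \<in> {1..T}"
  show "\<forall>\<^sub>F \<rho> in at_right 0. x j \<noteq> a \<longrightarrow> \<rho> \<le> \<bar>x j - a\<bar> \<and> \<rho> \<le> real T - \<bar>x j - a\<bar>"
  proof (cases "x j = a")
    case False
    moreover have "0 \<le> x j" "x j < real T" using x j by auto
    ultimately have "min \<bar>x j - a\<bar> (real T - \<bar>x j - a\<bar>) > 0" using a by (auto simp: abs_if)
    from eventually_at_right_zero_le[OF this] show ?thesis by (rule eventually_mono) auto
  qed simp
qed

lemma powr_pred_add_one_less:
  fixes m p :: real
  assumes m: "m \<ge> 2" and p: "p > 1"
  shows "(m - 1) powr p + 1 < m powr p"
proof -
  have a: "(m - 1) powr (p - 1) < m powr (p - 1)" using m p by (intro powr_less_mono2) auto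
  have b: "1 < m powr (p - 1)" using powr_less_mono2[of "p - 1" 1 m] m p by simp
  have "(m - 1) powr p = (m - 1) * (m - 1) powr (p - 1)"
    using m by (simp add: powr_mult_base)
  also have "\<dots> < (m - 1) * m powr (p - 1)" using a m by simp
  finally have "(m - 1) powr p + 1 < (m - 1) * m powr (p - 1) + m powr (p - 1)" using b by linarith
  also have "\<dots> = m * m powr (p - 1)" by (simp add: algebra_simps)
  also have "\<dots> = m powr p" using m by (simp add: powr_mult_base)
  finally show ?thesis .
qed

lemma powr_gap_near_zero:
  fixes m p :: real
  assumes m: "m \<ge> 2" and p: "p > 1"
  obtains \<eta> \<epsilon> where "\<eta> > 0" "\<epsilon> > 0"
    "\<And>d. 0 \<le> d \<Longrightarrow> d \<le> \<epsilon> \<Longrightarrow> \<bar>m - 1 - d\<bar> powr p + (1 + \<eta>) \<le> \<bar>m - d\<bar> powr p"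
proof -
  define g where "g d = (m - d) powr p - (m - 1 - d) powr p" for d
  define \<eta> where "\<eta> = (g 0 - 1) / 2"
  have "g 0 > 1" using powr_pred_add_one_less[OF m p] unfolding g_def by simp
  then have \<eta>: "\<eta> > 0" "1 + \<eta> < g 0" unfolding \<eta>_def by (simp_all add: field_simps)
  have "isCont g 0" unfolding g_def using m by (intro continuous_intros) auto
  then have "\<forall>\<^sub>F d in nhds 0. 1 + \<eta> < g d"
    using \<eta>(2) by (intro order_tendstoD(1)) (auto simp: isCont_def tendsto_at_iff_tendsto_nhds)
  then obtain \<epsilon> where \<epsilon>: "\<epsilon> > 0" "\<And>d. dist d 0 < \<epsilon> \<Longrightarrow> 1 + \<eta> < g d"
    by (auto simp: eventually_nhds_metric)
  show ?thesis
  proof (rule that[OF \<eta>(1), of "min (\<epsilon> / 2) (1 / 2)"])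
    fix d assume "0 \<le> d" "d \<le> min (\<epsilon> / 2) (1 / 2)"
    then show "\<bar>m - 1 - d\<bar> powr p + (1 + \<eta>) \<le> \<bar>m - d\<bar> powr p"
      using \<epsilon>(2)[of d] \<epsilon>(1) m unfolding g_def by auto
  qed (use \<epsilon> in auto)
qed

lemma enn2real_diff_le_of_split:
  fixes E P P' J :: ennreal
  assumes G: "G = E + 2 * P" and G': "G' = E + 2 * P'" and fin: "G < \<infinity>"
    and le: "P' + ennreal \<eta> * J \<le> P + ennreal z" and J: "ennreal j \<le> J"
    and \<eta>: "\<eta> > 0" and z: "z \<ge> 0"
  shows "enn2real G' - enn2real G \<le> 2 * z - 2 * \<eta> * j"
proof -
  obtain e pp where e: "E = ennreal e" "e \<ge> 0" and pp: "P = ennreal pp" "pp \<ge> 0"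
    using fin unfolding G by (cases E; cases P) (auto simp: ennreal_mult_less_top)
  have "P' + ennreal \<eta> * J < \<infinity>" using order.strict_trans1[OF le, of \<infinity>] pp by simp
  then obtain pp' jj where pp': "P' = ennreal pp'" "pp' \<ge> 0" and jj: "J = ennreal jj" "jj \<ge> 0"
    using \<eta> by (cases P'; cases J) (auto simp: ennreal_mult_less_top)
  have le_real: "pp' + \<eta> * jj \<le> pp + z" and "j \<le> jj"
    using le J \<eta> z pp' jj pp
    by (auto simp: ennreal_mult[symmetric] ennreal_plus[symmetric] ennreal_le_iff2 simp del: ennreal_plus)
  have "enn2real G' - enn2real G = 2 * pp' - 2 * pp"
  proof -
    have two: "ennreal (2 * v) = 2 * ennreal v" if "v \<ge> 0" for v using that by (simp add: ennreal_mult)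
    have "G' = ennreal (e + 2 * pp')" "G = ennreal (e + 2 * pp)" using G G' e pp pp' by (simp_all add: two)
    then show ?thesis using e pp pp' by (simp del: ennreal_plus)
  qed
  moreover have "\<eta> * j \<le> \<eta> * jj" using \<open>j \<le> jj\<close> \<eta> by simp
  ultimately show ?thesis using le_real by linarith
qed

lemma filterlim_at_bot_at_right_powr_bound:
  fixes f :: "real \<Rightarrow> real"
  assumes c: "c > 0" and a: "a > 0" and h0: "h0 > 0"
    and b: "\<And>h. 0 < h \<Longrightarrow> h < h0 \<Longrightarrow> f h \<le> C - c * h powr (- a)"
  shows "filterlim f at_bot (at_right 0)"
proof -
  have g: "filterlim (\<lambda>h. C - c * h powr (- a)) at_bot (at_right 0)"
    using c a by real_asymp
  have ev: "eventually (\<lambda>h. f h \<le> C - c * h powr (- a)) (at_right 0)"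
    unfolding eventually_at_right_field using h0 b by auto
  show ?thesis unfolding filterlim_at_bot
  proof
    fix Z
    from g have "eventually (\<lambda>h. C - c * h powr (- a) \<le> Z) (at_right 0)" unfolding filterlim_at_bot by blast
    with ev show "eventually (\<lambda>h. f h \<le> Z) (at_right 0)" by eventually_elim auto
  qed
qed

text \<open>The point \<open>a = x i\<close> has multiplicity \<open>m\<close>; all other points keep distance at least \<open>\<rho>\<close>
  from it modulo \<open>T\<close>, and \<open>gap\<close> quantifies the strict convexity of \<open>r \<mapsto> r\<^sup>p\<close> at \<open>r = m\<close>.\<close>

locale rigid_move =
  fixes s p :: real and T :: nat and x :: "nat \<Rightarrow> real" and i :: nat and m \<rho> \<eta> :: real
  assumes s: "0 < s" "s < 1" and p: "1 < p" and sp: "s * p < 1"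
    and x: "\<forall>j\<in>{1..T}. 0 \<le> x j \<and> x j < real T" and i: "i \<in> {1..T}"
    and m: "real (card {j\<in>{1..T}. x j = x i}) = m"
    and \<rho>: "0 < \<rho>" "\<rho> \<le> real T / 4" "\<rho> \<le> 1"
    and isolated: "\<forall>j\<in>{1..T}. x j \<noteq> x i \<longrightarrow> \<rho> \<le> \<bar>x j - x i\<bar> \<and> \<rho> \<le> real T - \<bar>x j - x i\<bar>"
    and \<eta>: "\<eta> > 0"
    and gap: "\<And>d. 0 \<le> d \<Longrightarrow> d \<le> 2 * \<rho> \<Longrightarrow> \<bar>m - 1 - d\<bar> powr p + (1 + \<eta>) \<le> \<bar>m - d\<bar> powr p"
begin

abbreviation "a \<equiv> x i"
abbreviation "q \<equiv> 1 + s * p"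
abbreviation "u \<equiv> u_conf T x"
abbreviation "K \<equiv> gagliardo_kernel s p T x"
abbreviation "K' h \<equiv> gagliardo_kernel s p T (rigid_var x i h)"
abbreviation "D h \<equiv> jump_count T a h"

definition bare_kernel :: "real \<Rightarrow> real \<Rightarrow> ennreal" where
  "bare_kernel t y = ennreal (\<bar>t - y\<bar> powr (- q))"

lemma bare_kernel_measurable [measurable]: "case_prod bare_kernel \<in> borel_measurable (lborel \<Otimes>\<^sub>M lborel)"
  unfolding bare_kernel_def by measurable

lemma T_pos: "T > 0"
  using i by auto

lemma u_near:
  assumes "\<bar>y - a\<bar> < \<rho>" "\<bar>z - a\<bar> < \<rho>"
  shows "u y - u z = (y - z) + m * (of_bool (y < a) - of_bool (z < a))"
  unfolding m[symmetric] using x i \<rho> isolated assms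
  by (intro u_conf_diff_near_point[OF T_pos x]) auto

lemma K_eq: "K t y = ennreal (\<bar>u t - u y\<bar> powr p / \<bar>t - y\<bar> powr q)"
  unfolding gagliardo_kernel_def ..

lemma K'_eq: "K' h t y = ennreal (\<bar>u t - u y + (D h t - D h y)\<bar> powr p / \<bar>t - y\<bar> powr q)"
  unfolding gagliardo_kernel_def u_conf_rigid_var[OF i] by (simp add: algebra_simps)

lemma D_eq_one: "0 < h \<Longrightarrow> h < \<rho> / 2 \<Longrightarrow> t \<in> {a..<a + h} \<Longrightarrow> D h t = 1"
  using T_pos \<rho> by (intro jump_count_eq_one) auto

lemma D_eq_zero:
  "0 < h \<Longrightarrow> h < \<rho> / 2 \<Longrightarrow> t \<in> {a - real T / 2..<a + real T / 2} \<Longrightarrow> t \<notin> {a..<a + h} \<Longrightarrow> D h t = 0"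
  using T_pos \<rho> by (intro jump_count_eq_zero) auto

text \<open>Only pairs \<open>(t, y)\<close> with \<open>t\<close> in the moved interval \<open>[a, a + h)\<close> and \<open>y\<close> outside of it
  (modulo \<open>T\<close>) see the change of \<open>u\<close>; by symmetry and periodicity they contribute twice.\<close>

lemma energy_nn_split:
  assumes h: "0 < h" "h < \<rho> / 2"
  obtains E where
    "energy_nn s p T x = E + 2 * (\<integral>\<^sup>+t\<in>{a..<a + h}. (\<integral>\<^sup>+y. K t y * of_bool (D h y = 0) \<partial>lborel) \<partial>lborel)"
    "energy_nn s p T (rigid_var x i h)
       = E + 2 * (\<integral>\<^sup>+t\<in>{a..<a + h}. (\<integral>\<^sup>+y. K' h t y * of_bool (D h y = 0) \<partial>lborel) \<partial>lborel)"
proof -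
  define c where "c = a - real T / 2"
  have T: "real T > 0" using T_pos by simp
  have D_cases: "(D h t \<noteq> 0 \<and> D h y = 0) \<or> (D h t = 0 \<and> D h y \<noteq> 0)" if "D h t \<noteq> D h y" for t y
    using jump_count_cases[OF T_pos, of h a t] jump_count_cases[OF T_pos, of h a y] that h \<rho> by auto
  have window: "(\<integral>\<^sup>+y. Q t y * of_bool (D h t \<noteq> 0 \<and> D h y = 0) \<partial>lborel) * indicator {c..<c + real T} t
      = (\<integral>\<^sup>+y. Q t y * of_bool (D h y = 0) \<partial>lborel) * indicator {a..<a + h} t"
    for Q :: "real \<Rightarrow> real \<Rightarrow> ennreal" and t
    using D_eq_one[OF h, of t] D_eq_zero[OF h, of t] h \<rho> unfolding c_def
    by (cases "t \<in> {a..<a + h}"; cases "t \<in> {c..<c + real T}") (auto simp: c_def indicator_def)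
  have split: "energy_nn s p T y = (\<integral>\<^sup>+t\<in>{0..<real T}. (\<integral>\<^sup>+z. gagliardo_kernel s p T y t z * of_bool (D h t = D h z) \<partial>lborel) \<partial>lborel)
      + 2 * (\<integral>\<^sup>+t\<in>{a..<a + h}. (\<integral>\<^sup>+z. gagliardo_kernel s p T y t z * of_bool (D h z = 0) \<partial>lborel) \<partial>lborel)" for y
    unfolding energy_nn_def window[symmetric]
    by (rule nn_integral_periodic_split_by_label[OF _ T])
       (auto simp: gagliardo_kernel_commute gagliardo_kernel_add_period[OF T_pos] jump_count_add_period[OF T_pos] D_cases)
  have "K' h t z * of_bool (D h t = D h z) = K t z * of_bool (D h t = D h z)" for t z
    by (simp add: K_eq K'_eq)
  then have "energy_nn s p T (rigid_var x i h)
      = (\<integral>\<^sup>+t\<in>{0..<real T}. (\<integral>\<^sup>+z. K t z * of_bool (D h t = D h z) \<partial>lborel) \<partial>lborel)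
        + 2 * (\<integral>\<^sup>+t\<in>{a..<a + h}. (\<integral>\<^sup>+y. K' h t y * of_bool (D h y = 0) \<partial>lborel) \<partial>lborel)"
    using split[of "rigid_var x i h"] by simp
  with split[of x] show ?thesis by (rule that)
qed

definition far_mass :: ennreal where
  "far_mass = (\<integral>\<^sup>+z\<in>{z. \<rho> / 2 \<le> \<bar>z\<bar>}. ennreal (\<bar>z\<bar> powr (- q)) \<partial>lborel)"

lemma far_mass_finite: "far_mass < \<infinity>"
  unfolding far_mass_def using s p \<rho> by (intro abs_powr_nn_integral_far_finite) auto

lemma moved_kernel_le:
  assumes h: "0 < h" "h < \<rho> / 2" and t: "t \<in> {a..<a + h}"
  shows "K' h t y * of_bool (D h y = 0)
    \<le> K' h t y * indicator {a - \<rho><..<a} y + bare_kernel t y * indicator {a + h..<a + \<rho>} y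
      + ennreal (real T powr p * \<bar>t - y\<bar> powr (- q)) * indicator {z. \<rho> / 2 \<le> \<bar>z\<bar>} (y - t)"
proof (cases "D h y = 0")
  case Dy: True
  consider "y \<in> {a - \<rho><..<a}" | "y \<in> {a + h..<a + \<rho>}" | "y \<notin> {a - \<rho><..<a}" "y \<notin> {a + h..<a + \<rho>}"
    by blast
  then show ?thesis
  proof cases
    case 1
    then show ?thesis by (intro add_increasing2) (auto simp: indicator_def)
  next
    case 2
    then have "u t - u y = t - y" using u_near[of t y] t h by auto
    then have "K' h t y = ennreal (\<bar>t - y + 1\<bar> powr p / \<bar>t - y\<bar> powr q)"
      using K'_eq[of h t y] D_eq_one[OF h t] Dy by simp
    also have "\<dots> \<le> ennreal (1 / \<bar>t - y\<bar> powr q)"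
      using 2 t \<rho> p by (intro ennreal_leI divide_right_mono powr_le1) auto
    also have "\<dots> = bare_kernel t y" by (simp only: bare_kernel_def powr_minus_divide)
    finally show ?thesis using 2 by (intro add_increasing2 add_increasing) (auto simp: indicator_def)
  next
    case 3
    have "y \<notin> {a..<a + h}" using D_eq_one[OF h] Dy by auto
    then have "\<rho> \<le> \<bar>y - a\<bar>" using 3 by auto
    then have "\<rho> / 2 \<le> \<bar>y - t\<bar>" using t h by (auto simp: abs_if split: if_splits)
    moreover have "K' h t y \<le> ennreal (real T powr p * \<bar>t - y\<bar> powr (- q))"
      using gagliardo_kernel_le_far[OF T_pos] p by simp
    ultimately show ?thesis using Dy by (intro add_increasing) (auto simp: indicator_def)
  qed
qed simp

lemma moved_inner_le:
  assumes h: "0 < h" "h < \<rho> / 2" and t: "t \<in> {a..<a + h}"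
  shows "(\<integral>\<^sup>+y. K' h t y * of_bool (D h y = 0) \<partial>lborel)
    \<le> (\<integral>\<^sup>+y\<in>{a - \<rho><..<a}. K' h t y \<partial>lborel) + (\<integral>\<^sup>+y\<in>{a + h..<a + \<rho>}. bare_kernel t y \<partial>lborel)
      + ennreal (real T powr p) * far_mass"
proof -
  let ?far = "\<lambda>y. ennreal (real T powr p * \<bar>t - y\<bar> powr (- q)) * indicator {z. \<rho> / 2 \<le> \<bar>z\<bar>} (y - t)"
  have "(\<integral>\<^sup>+y. K' h t y * of_bool (D h y = 0) \<partial>lborel)
      \<le> (\<integral>\<^sup>+y. K' h t y * indicator {a - \<rho><..<a} y + bare_kernel t y * indicator {a + h..<a + \<rho>} y
           + ?far y \<partial>lborel)"
    by (intro nn_integral_mono moved_kernel_le[OF h t])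
  also have "\<dots> = (\<integral>\<^sup>+y\<in>{a - \<rho><..<a}. K' h t y \<partial>lborel) + (\<integral>\<^sup>+y\<in>{a + h..<a + \<rho>}. bare_kernel t y \<partial>lborel)
      + (\<integral>\<^sup>+y. ?far y \<partial>lborel)"
    by (simp add: nn_integral_add)
  also have "(\<integral>\<^sup>+y. ?far y \<partial>lborel) = (\<integral>\<^sup>+y. ?far (y + t) \<partial>lborel)"
    by (rule nn_integral_lborel_translate) measurable
  also have "\<dots> = ennreal (real T powr p) * far_mass"
    unfolding far_mass_def
    by (subst nn_integral_cmult[symmetric]) (auto intro!: nn_integral_cong simp: ennreal_mult mult.assoc)
  finally show ?thesis .
qed

text \<open>Left of \<open>a\<close> the \<open>m\<close> coinciding points make \<open>u\<close> jump by \<open>m\<close>; moving one of them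
  lowers the jump to \<open>m - 1\<close>, and strict convexity of \<open>r \<mapsto> r\<^sup>p\<close> turns this into a gain
  of at least \<open>1 + \<eta>\<close> times \<open>bare_kernel\<close>.\<close>

lemma kernel_gain_left:
  assumes h: "0 < h" "h < \<rho> / 2" and t: "t \<in> {a..<a + h}" and y: "y \<in> {a - \<rho><..<a}"
  shows "K' h t y + ennreal (1 + \<eta>) * bare_kernel t y \<le> K t y"
proof -
  define d where "d = t - y"
  have Dy: "D h y = 0" using y \<rho> h by (intro D_eq_zero) auto
  have u: "u t - u y = d - m" using u_near[of t y] y t h unfolding d_def by auto
  have d: "0 < d" "d \<le> 2 * \<rho>" using y t h unfolding d_def by auto
  have "\<bar>m - 1 - d\<bar> powr p / d powr q + (1 + \<eta>) * (1 / d powr q)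
      = (\<bar>m - 1 - d\<bar> powr p + (1 + \<eta>)) / d powr q"
    by (simp add: add_divide_distrib)
  also have "\<dots> \<le> \<bar>m - d\<bar> powr p / d powr q"
    using gap d by (intro divide_right_mono) auto
  finally have "ennreal (\<bar>m - 1 - d\<bar> powr p / d powr q) + ennreal (1 + \<eta>) * ennreal (1 / d powr q)
      \<le> ennreal (\<bar>m - d\<bar> powr p / d powr q)"
    using \<eta> by (simp add: ennreal_mult[symmetric] ennreal_plus[symmetric] del: ennreal_plus)
  moreover have "\<bar>u t - u y + (D h t - D h y)\<bar> = \<bar>m - 1 - d\<bar>" "\<bar>u t - u y\<bar> = \<bar>m - d\<bar>" "\<bar>t - y\<bar> = d"
    using u D_eq_one[OF h t] Dy d by (auto simp: d_def)
  then have "K' h t y = ennreal (\<bar>m - 1 - d\<bar> powr p / d powr q)"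
    "K t y = ennreal (\<bar>m - d\<bar> powr p / d powr q)" "bare_kernel t y = ennreal (1 / d powr q)"
    by (simp_all only: K'_eq K_eq bare_kernel_def powr_minus_divide)
  ultimately show ?thesis by simp
qed

lemma fixed_inner_ge:
  assumes h: "0 < h" "h < \<rho> / 2" and t: "t \<in> {a..<a + h}"
  shows "(\<integral>\<^sup>+y\<in>{a - \<rho><..<a}. K' h t y \<partial>lborel) + ennreal (1 + \<eta>) * (\<integral>\<^sup>+y\<in>{a - \<rho><..<a}. bare_kernel t y \<partial>lborel)
    \<le> (\<integral>\<^sup>+y. K t y * of_bool (D h y = 0) \<partial>lborel)"
proof -
  have "(K' h t y + ennreal (1 + \<eta>) * bare_kernel t y) * indicator {a - \<rho><..<a} y \<le> K t y * of_bool (D h y = 0)"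
    for y
    using kernel_gain_left[OF h t, of y] D_eq_zero[OF h, of y] h \<rho> by (cases "y \<in> {a - \<rho><..<a}") auto
  then have "(\<integral>\<^sup>+y. (K' h t y + ennreal (1 + \<eta>) * bare_kernel t y) * indicator {a - \<rho><..<a} y \<partial>lborel)
      \<le> (\<integral>\<^sup>+y. K t y * of_bool (D h y = 0) \<partial>lborel)"
    by (intro nn_integral_mono)
  then show ?thesis by (simp add: nn_integral_add nn_integral_cmult distrib_right mult.assoc)
qed

lemma bare_interaction_ge:
  assumes h: "0 < h" "h < \<rho> / 2"
  shows "ennreal (h * h * (2 * h) powr (- q))
    \<le> (\<integral>\<^sup>+t\<in>{a..<a + h}. (\<integral>\<^sup>+y\<in>{a - \<rho><..<a}. bare_kernel t y \<partial>lborel) \<partial>lborel)"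
proof -
  have "ennreal ((2 * h) powr (- q)) * indicator {a - h<..<a} y \<le> bare_kernel t y * indicator {a - \<rho><..<a} y"
    if "t \<in> {a..<a + h}" for t y
  proof (cases "y \<in> {a - h<..<a}")
    case True
    then have "0 < \<bar>t - y\<bar>" "\<bar>t - y\<bar> \<le> 2 * h" using that by auto
    moreover have "s * p > 0" using s p by simp
    ultimately have "(2 * h) powr (- q) \<le> \<bar>t - y\<bar> powr (- q)" by (intro powr_mono2') auto
    then show ?thesis using True h unfolding bare_kernel_def by (auto intro: ennreal_leI)
  qed simp
  then have "(\<integral>\<^sup>+t\<in>{a..<a + h}. (\<integral>\<^sup>+y\<in>{a - h<..<a}. ennreal ((2 * h) powr (- q)) \<partial>lborel) \<partial>lborel)
      \<le> (\<integral>\<^sup>+t\<in>{a..<a + h}. (\<integral>\<^sup>+y\<in>{a - \<rho><..<a}. bare_kernel t y \<partial>lborel) \<partial>lborel)"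
    by (intro nn_integral_mono) (auto simp: indicator_def intro!: nn_integral_mono)
  moreover have "(\<integral>\<^sup>+t\<in>{a..<a + h}. (\<integral>\<^sup>+y\<in>{a - h<..<a}. ennreal ((2 * h) powr (- q)) \<partial>lborel) \<partial>lborel)
      = ennreal (h * h * (2 * h) powr (- q))"
    using h by (simp add: nn_integral_cmult_indicator nn_integral_multc ennreal_mult[symmetric] mult_ac)
  ultimately show ?thesis by simp
qed

text \<open>The interaction of the moved interval with the region right of it is dominated, after
  the reflection \<open>y \<mapsto> 2 a + h - y\<close>, by the bare interaction with the region left of it;
  what remains of the gain is \<open>\<eta>\<close> times the latter.\<close>

lemma moved_interaction_le:
  assumes h: "0 < h" "h < \<rho> / 2"
  shows "(\<integral>\<^sup>+t\<in>{a..<a + h}. (\<integral>\<^sup>+y. K' h t y * of_bool (D h y = 0) \<partial>lborel) \<partial>lborel)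
      + ennreal \<eta> * (\<integral>\<^sup>+t\<in>{a..<a + h}. (\<integral>\<^sup>+y\<in>{a - \<rho><..<a}. bare_kernel t y \<partial>lborel) \<partial>lborel)
    \<le> (\<integral>\<^sup>+t\<in>{a..<a + h}. (\<integral>\<^sup>+y. K t y * of_bool (D h y = 0) \<partial>lborel) \<partial>lborel)
      + ennreal (real T powr p * enn2real far_mass * h)"
proof -
  let ?I = "{a..<a + h}" and ?L = "{a - \<rho><..<a}" and ?R = "{a + h..<a + \<rho>}"
  define N where "N = (\<integral>\<^sup>+t\<in>?I. (\<integral>\<^sup>+y\<in>?L. K' h t y \<partial>lborel) \<partial>lborel)"
  define R where "R = (\<integral>\<^sup>+t\<in>?I. (\<integral>\<^sup>+y\<in>?R. bare_kernel t y \<partial>lborel) \<partial>lborel)"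
  define J where "J = (\<integral>\<^sup>+t\<in>?I. (\<integral>\<^sup>+y\<in>?L. bare_kernel t y \<partial>lborel) \<partial>lborel)"
  define c where "c = ennreal (real T powr p * enn2real far_mass * h)"
  have c: "c = (\<integral>\<^sup>+t\<in>?I. ennreal (real T powr p) * far_mass \<partial>lborel)"
    using h far_mass_finite
    by (simp add: c_def nn_integral_cmult_indicator ennreal_mult ennreal_enn2real_if)
  have "(\<integral>\<^sup>+t\<in>?I. (\<integral>\<^sup>+y. K' h t y * of_bool (D h y = 0) \<partial>lborel) \<partial>lborel)
      \<le> (\<integral>\<^sup>+t\<in>?I. (\<integral>\<^sup>+y\<in>?L. K' h t y \<partial>lborel) + (\<integral>\<^sup>+y\<in>?R. bare_kernel t y \<partial>lborel)
           + ennreal (real T powr p) * far_mass \<partial>lborel)"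
    using moved_inner_le[OF h] by (intro nn_integral_mono) (auto simp: indicator_def)
  also have "\<dots> = N + R + c"
    unfolding N_def R_def c by (simp add: nn_integral_add distrib_right)
  finally have upper: "(\<integral>\<^sup>+t\<in>?I. (\<integral>\<^sup>+y. K' h t y * of_bool (D h y = 0) \<partial>lborel) \<partial>lborel) \<le> N + R + c" .
  have "N + ennreal (1 + \<eta>) * J
      = (\<integral>\<^sup>+t\<in>?I. (\<integral>\<^sup>+y\<in>?L. K' h t y \<partial>lborel) + ennreal (1 + \<eta>) * (\<integral>\<^sup>+y\<in>?L. bare_kernel t y \<partial>lborel) \<partial>lborel)"
    unfolding N_def J_def by (simp add: nn_integral_add nn_integral_cmult distrib_right mult.assoc)
  also have "\<dots> \<le> (\<integral>\<^sup>+t\<in>?I. (\<integral>\<^sup>+y. K t y * of_bool (D h y = 0) \<partial>lborel) \<partial>lborel)"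
    using fixed_inner_ge[OF h] by (intro nn_integral_mono) (auto simp: indicator_def)
  finally have lower: "N + ennreal (1 + \<eta>) * J
      \<le> (\<integral>\<^sup>+t\<in>?I. (\<integral>\<^sup>+y. K t y * of_bool (D h y = 0) \<partial>lborel) \<partial>lborel)" .
  have "R \<le> J"
    unfolding R_def J_def bare_kernel_def
    by (rule nn_integral_interaction_reflect_le[where c = a]) (use h in auto)
  have "(\<integral>\<^sup>+t\<in>?I. (\<integral>\<^sup>+y. K' h t y * of_bool (D h y = 0) \<partial>lborel) \<partial>lborel) + ennreal \<eta> * J
      \<le> N + R + c + ennreal \<eta> * J"
    using upper by (rule add_right_mono)
  also have "\<dots> \<le> N + J + c + ennreal \<eta> * J"
    by (intro add_mono order_refl) (rule \<open>R \<le> J\<close>)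
  also have "\<dots> = N + ennreal (1 + \<eta>) * J + c"
    using \<eta> by (simp add: ennreal_plus distrib_right add_ac)
  also have "\<dots> \<le> (\<integral>\<^sup>+t\<in>?I. (\<integral>\<^sup>+y. K t y * of_bool (D h y = 0) \<partial>lborel) \<partial>lborel) + c"
    using lower by (rule add_right_mono)
  finally show ?thesis unfolding J_def c_def .
qed

lemma F_energy_rigid_var_diff_le:
  assumes h: "0 < h" "h < \<rho> / 2"
  shows "F_energy s p T (rigid_var x i h) - F_energy s p T x
    \<le> h * (2 * real T powr p * enn2real far_mass - 2 * \<eta> * 2 powr (- q) * h powr (- (s * p)))"
proof -
  obtain E where split:
    "energy_nn s p T x = E + 2 * (\<integral>\<^sup>+t\<in>{a..<a + h}. (\<integral>\<^sup>+y. K t y * of_bool (D h y = 0) \<partial>lborel) \<partial>lborel)"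
    "energy_nn s p T (rigid_var x i h)
       = E + 2 * (\<integral>\<^sup>+t\<in>{a..<a + h}. (\<integral>\<^sup>+y. K' h t y * of_bool (D h y = 0) \<partial>lborel) \<partial>lborel)"
    using energy_nn_split[OF h] by blast
  have finite: "energy_nn s p T x < \<infinity>"
    using s p sp x by (intro energy_nn_finite[OF T_pos]) auto
  have "F_energy s p T (rigid_var x i h) - F_energy s p T x
      \<le> 2 * (real T powr p * enn2real far_mass * h) - 2 * \<eta> * (h * h * (2 * h) powr (- q))"
    unfolding F_energy_eq_enn2real
    by (rule enn2real_diff_le_of_split[OF split finite moved_interaction_le[OF h] bare_interaction_ge[OF h] \<eta>])
       (use h in simp)
  also have "h * h * (2 * h) powr (- q) = h * (2 powr (- q) * h powr (- (s * p)))"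
    using h by (simp add: powr_mult powr_minus_divide powr_add[symmetric] field_simps)
  finally show ?thesis by (simp add: algebra_simps)
qed

lemma rigid_var_quotient_tendsto_at_bot:
  "filterlim (\<lambda>h. (F_energy s p T (rigid_var x i h) - F_energy s p T x) / h) at_bot (at_right 0)"
proof (rule filterlim_at_bot_at_right_powr_bound)
  show "2 * \<eta> * 2 powr (- q) > 0" "s * p > 0" "\<rho> / 2 > 0" using \<eta> s p \<rho> by auto
  fix h assume "0 < h" "h < \<rho> / 2"
  then show "(F_energy s p T (rigid_var x i h) - F_energy s p T x) / h
      \<le> 2 * real T powr p * enn2real far_mass - 2 * \<eta> * 2 powr (- q) * h powr (- (s * p))"
    using F_energy_rigid_var_diff_le by (simp add: divide_le_eq mult.commute)
qed

end

lemma rigid_move_exists: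
  fixes x :: "nat \<Rightarrow> real"
  assumes s: "0 < s" "s < 1" and p: "1 < p" and sp: "s * p < 1"
    and x: "\<forall>j\<in>{1..T}. 0 \<le> x j \<and> x j < real T" and i: "i \<in> {1..T}"
    and mult: "card {j\<in>{1..T}. x j = x i} > 1"
  obtains \<rho> \<eta> where "rigid_move s p T x i (real (card {j\<in>{1..T}. x j = x i})) \<rho> \<eta>"
proof -
  define m where "m = real (card {j\<in>{1..T}. x j = x i})"
  have "m \<ge> 2" using mult unfolding m_def by simp
  then obtain \<eta> \<epsilon> where "\<eta> > 0" and "\<epsilon> > 0"
    and gap: "\<And>d. 0 \<le> d \<Longrightarrow> d \<le> \<epsilon> \<Longrightarrow> \<bar>m - 1 - d\<bar> powr p + (1 + \<eta>) \<le> \<bar>m - d\<bar> powr p"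
    using powr_gap_near_zero[OF _ p] by blast
  have "\<forall>\<^sub>F \<rho> in at_right 0. (0 < \<rho> \<and> \<rho> \<le> real T / 4) \<and> (0 < \<rho> \<and> \<rho> \<le> 1) \<and> (0 < \<rho> \<and> \<rho> \<le> \<epsilon> / 2)
      \<and> (\<forall>j\<in>{1..T}. x j \<noteq> x i \<longrightarrow> \<rho> \<le> \<bar>x j - x i\<bar> \<and> \<rho> \<le> real T - \<bar>x j - x i\<bar>)"
    using i x \<open>\<epsilon> > 0\<close> by (intro eventually_conj eventually_at_right_zero_le isolation_radius_eventually) auto
  then obtain \<rho> where "(0 < \<rho> \<and> \<rho> \<le> real T / 4) \<and> (0 < \<rho> \<and> \<rho> \<le> 1) \<and> (0 < \<rho> \<and> \<rho> \<le> \<epsilon> / 2)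
      \<and> (\<forall>j\<in>{1..T}. x j \<noteq> x i \<longrightarrow> \<rho> \<le> \<bar>x j - x i\<bar> \<and> \<rho> \<le> real T - \<bar>x j - x i\<bar>)"
    using eventually_happens'[OF trivial_limit_at_right_real] by blast
  then have "rigid_move s p T x i m \<rho> \<eta>"
    using s p sp x i \<open>\<eta> > 0\<close> gap by unfold_locales (auto simp: m_def)
  then show ?thesis using that unfolding m_def by blast
qed

lemma F_energy_rigid_var_quotient_at_right:
  assumes "0 < s" "s < 1" "1 < p" "s * p < 1"
    and "\<forall>j\<in>{1..T}. 0 \<le> x j \<and> x j < real T" and "i \<in> {1..T}"
    and "card {j\<in>{1..T}. x j = x i} > 1"
  shows "filterlim (\<lambda>h. (F_energy s p T (rigid_var x i h) - F_energy s p T x) / h) at_bot (at_right 0)"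
  by (rule rigid_move_exists[OF assms]) (rule rigid_move.rigid_var_quotient_tendsto_at_bot)

lemma F_energy_reflect: "T > 0 \<Longrightarrow> F_energy s p T (\<lambda>j. c - x j) = F_energy s p T x"
  by (simp add: F_energy_eq_enn2real energy_nn_reflect)

lemma F_energy_rigid_var_quotient_at_left:
  assumes hyps: "0 < s" "s < 1" "1 < p" "s * p < 1"
    and x: "\<forall>j\<in>{1..T}. 0 \<le> x j \<and> x j < real T" and i: "i \<in> {1..T}"
    and mult: "card {j\<in>{1..T}. x j = x i} > 1"
  shows "filterlim (\<lambda>h. (F_energy s p T (rigid_var x i h) - F_energy s p T x) / h) at_top (at_left 0)"
proof -
  define c where "c = Max (x ` {1..T})"
  define y where "y = (\<lambda>j. c - x j)"
  have T: "T > 0" using i by auto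
  have y: "\<forall>j\<in>{1..T}. 0 \<le> y j \<and> y j < real T"
  proof
    fix j assume j: "j \<in> {1..T}"
    have "x j \<le> c" unfolding c_def using j by (intro Max_ge) auto
    moreover have "c < real T" unfolding c_def using j x by (subst Max_less_iff) auto
    ultimately show "0 \<le> y j \<and> y j < real T" using x j unfolding y_def by force
  qed
  have "{j\<in>{1..T}. y j = y i} = {j\<in>{1..T}. x j = x i}" by (auto simp: y_def)
  then have "filterlim (\<lambda>h. (F_energy s p T (rigid_var y i h) - F_energy s p T y) / h) at_bot (at_right 0)"
    using F_energy_rigid_var_quotient_at_right[OF hyps y i] mult by simp
  then have "filterlim (\<lambda>h. - ((F_energy s p T (rigid_var y i h) - F_energy s p T y) / h)) at_top (at_right 0)"
    by (rule filterlim_uminus_at_bot[THEN iffD1])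
  moreover have "F_energy s p T (rigid_var x i (- h)) = F_energy s p T (rigid_var y i h)" for h
    using F_energy_reflect[OF T, of s p c "rigid_var x i (- h)"] rigid_var_reflect[of c x i "- h"]
    by (simp add: y_def)
  moreover have "F_energy s p T y = F_energy s p T x"
    unfolding y_def by (rule F_energy_reflect[OF T])
  ultimately show ?thesis
    unfolding filterlim_at_left_to_right by simp
qed

theorem mainTheorem6:
  fixes s p :: real and T :: nat and x :: "nat \<Rightarrow> real" and i :: nat
  assumes "0 < s" "s < 1" "1 < p" "s * p < 1"
    and "\<forall>j\<in>{1..T}. 0 \<le> x j \<and> x j < real T"
    and "\<forall>j\<in>{1..T}. \<forall>k\<in>{1..T}. j \<le> k \<longrightarrow> x j \<le> x k"
    and "i \<in> {1..T}"
    and "card {j\<in>{1..T}. x j = x i} > 1"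
  shows "filterlim (\<lambda>h. (F_energy s p T (rigid_var x i h) - F_energy s p T x) / h)
            at_bot (at_right 0) \<and>
         filterlim (\<lambda>h. (F_energy s p T (rigid_var x i h) - F_energy s p T x) / h)
            at_top (at_left 0)"
proof
  show "filterlim (\<lambda>h. (F_energy s p T (rigid_var x i h) - F_energy s p T x) / h) at_bot (at_right 0)"
    using assms(1-5,7,8) by (rule F_energy_rigid_var_quotient_at_right)
  show "filterlim (\<lambda>h. (F_energy s p T (rigid_var x i h) - F_energy s p T x) / h) at_top (at_left 0)"
    using assms(1-5,7,8) by (rule F_energy_rigid_var_quotient_at_left)
qed

end
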